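(* Let $\Delta$ be a simplicial polytopal fan in $\mathbb{R}^d$ with ray generators $\mathbf{v}_1,\ldots,\mathbf{v}_n$, and let $\mathbf{u}^{(1)},\mathbf{u}^{(2)},\ldots\in\mathbb{S}^{d-1}$ be independently and uniformly chosen random directions. For $m\ge1$ let $U_m=(\mathbf{u}^{(1)},\ldots,\mathbf{u}^{(m)})^\mathsf{T}$. Then \[ \lim_{m\to\infty}\mathbb{P}\Big(|\hat{P}^\Delta(U_m,\mathbf{y})|=1\text{ for all }\mathbf{y}\in\mathbb{R}^m\Big)=1. \]
   Context: A fan is simplicial if every cone is generated by linearly independent vectors; polytopal if it is the normal fan of a polytope. $h_P(\mathbf{u})=\max_{\mathbf{x}\in P}\langle\mathbf{x},\mathbf{u}\rangle$. The deformation cone $\mathcal{P}(\Delta)$ is the set of polytopes whose normal fan is coarsened by $\Delta$, identified via support vectors $\mathbf{h}=(h_P(\mathbf{v}_i))_i$ with a closed polyhedral cone in $\mathbb{R}^n$. For $\mathbf{y}\in\mathbb{R}^m$, $\hat{P}^\Delta(U_m,\mathbf{y})\subseteq\mathbb{R}^n$ is the set of support vectors of polytopes $P\in\mathcal{P}(\Delta)$ minimizing $\frac1m\sum_{i=1}^m(h_P(\mathbf{u}^{(i)})-y^{(i)})^2$. *)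

theory Defs
  imports "HOL-Probability.Probability"
begin

definition polyhedral_cone :: "'a::euclidean_space set \<Rightarrow> bool" where
  "polyhedral_cone C \<longleftrightarrow> (\<exists>B. finite B \<and> C = convex_cone hull B)"

definition is_fan :: "'a::euclidean_space set set \<Rightarrow> bool" where
  "is_fan F \<longleftrightarrow> finite F \<and> F \<noteq> {} \<and> (\<forall>C\<in>F. polyhedral_cone C) \<and>
     (\<forall>C\<in>F. \<forall>G. G face_of C \<and> G \<noteq> {} \<longrightarrow> G \<in> F) \<and>
     (\<forall>C\<in>F. \<forall>D\<in>F. (C \<inter> D) face_of C \<and> (C \<inter> D) face_of D)"

definition simplicial_fan :: "'a::euclidean_space set set \<Rightarrow> bool" where
  "simplicial_fan F \<longleftrightarrow> is_fan F \<and> (\<forall>C\<in>F. \<exists>B. independent B \<and> C = convex_cone hull B)"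

definition is_polytope :: "'a::euclidean_space set \<Rightarrow> bool" where
  "is_polytope P \<longleftrightarrow> polytope P \<and> P \<noteq> {}"

definition support_fun :: "'a::euclidean_space set \<Rightarrow> 'a \<Rightarrow> real" where
  "support_fun P u = Sup ((\<lambda>x. x \<bullet> u) ` P)"

definition normal_cone :: "'a::euclidean_space set \<Rightarrow> 'a set \<Rightarrow> 'a set" where
  "normal_cone P F = {u. \<forall>x\<in>F. x \<bullet> u = support_fun P u}"

definition normal_fan :: "'a::euclidean_space set \<Rightarrow> 'a set set" where
  "normal_fan P = {normal_cone P G | G. G face_of P \<and> G \<noteq> {}}"

definition polytopal_fan :: "'a::euclidean_space set set \<Rightarrow> bool" where
  "polytopal_fan F \<longleftrightarrow> is_fan F \<and> (\<exists>P. is_polytope P \<and> F = normal_fan P)"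

definition fan_rays :: "'a::euclidean_space set set \<Rightarrow> 'a set set" where
  "fan_rays F = {C \<in> F. dim C = 1}"

definition coarsens :: "'a::euclidean_space set set \<Rightarrow> 'a set set \<Rightarrow> bool" where
  "coarsens N F \<longleftrightarrow> (\<forall>C\<in>N. \<exists>S\<subseteq>F. C = \<Union>S)"

(* deformation cone, as a set of polytopes *)
definition deformation_polytopes :: "'a::euclidean_space set set \<Rightarrow> 'a set set" where
  "deformation_polytopes F = {P. is_polytope P \<and> coarsens (normal_fan P) F}"

definition support_vector :: "('n \<Rightarrow> 'a::euclidean_space) \<Rightarrow> 'a set \<Rightarrow> ('n \<Rightarrow> real)" where
  "support_vector v P = (\<lambda>i. support_fun P (v i))"

definition ls_loss :: "(nat \<Rightarrow> 'a::euclidean_space) \<Rightarrow> nat \<Rightarrow> (nat \<Rightarrow> real) \<Rightarrow> 'a set \<Rightarrow> real" where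
  "ls_loss U m y P = (1 / real m) * (\<Sum>i<m. (support_fun P (U i) - y i)\<^sup>2)"

(* \<hat>P^\<Delta>(U_m, y): support vectors of minimizing polytopes in the deformation cone *)
definition lse :: "'a::euclidean_space set set \<Rightarrow> ('n \<Rightarrow> 'a) \<Rightarrow> (nat \<Rightarrow> 'a) \<Rightarrow> nat
                    \<Rightarrow> (nat \<Rightarrow> real) \<Rightarrow> ('n \<Rightarrow> real) set" where
  "lse F v U m y = {support_vector v P | P. P \<in> deformation_polytopes F \<and>
        (\<forall>Q \<in> deformation_polytopes F. ls_loss U m y P \<le> ls_loss U m y Q)}"

(* uniform (normalized surface) probability measure on the unit sphere S^{d-1}:
   radial projection of the uniform distribution on the unit ball *)
definition uniform_sphere :: "'a::euclidean_space measure" where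
  "uniform_sphere = distr (uniform_measure lborel (ball 0 1)) borel (\<lambda>x. x /\<^sub>R norm x)"

end

theory Submission
  imports Defs
begin

text \<open>On every maximal cone (chamber) of the fan, the support function of a polytope in the
  deformation cone is linear, so \<open>h\<^sub>P(u)\<close> is a fixed linear function of the support vector
  \<open>h = (h\<^sub>P(v\<^sub>i))\<^sub>i\<close>. The least squares problem thus minimizes a convex quadratic over the
  closed convex cone of admissible support vectors, and its minimizer is unique for every \<open>y\<close>
  exactly when the sampling map \<open>h \<mapsto> (h\<^sub>P(u\<^sub>1), \<dots>, h\<^sub>P(u\<^sub>m))\<close> is injective on that cone.
  Injectivity holds as soon as every normalized ray \<open>v\<^sub>i / |v\<^sub>i|\<close> has a sample direction close
  to it: the corresponding sampling equations form a strictly diagonally dominant system. Such a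
  neighbourhood of the \<open>i\<close>-th ray has some positive probability \<open>p\<^sub>i\<close> on the sphere, so the
  failure probability is at most \<open>\<Sum>\<^sub>i (1 - p\<^sub>i)\<^sup>m \<longrightarrow> 0\<close>.\<close>

section \<open>Finitely generated cones and dual bases\<close>

lemma convex_cone_sum:
  assumes "convex_cone T" "\<And>x. x \<in> A \<Longrightarrow> f x \<in> T"
  shows "sum f A \<in> T"
proof (cases "finite A")
  case True
  then show ?thesis
    using assms(2)
  proof (induction A rule: finite_induct)
    case empty then show ?case using assms(1) by (simp add: convex_cone_contains_0)
  next
    case (insert x A) then show ?case using assms(1) by (simp add: convex_cone_add)
  qed
qed (simp add: assms(1) convex_cone_contains_0)

lemma convex_cone_hull_finite:
  fixes S :: "'a::real_vector set"
  assumes "finite S"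
  shows "convex_cone hull S = {\<Sum>x\<in>S. c x *\<^sub>R x | c. \<forall>x\<in>S. 0 \<le> c x}"
    (is "_ = ?C")
proof (rule hull_unique)
  show "S \<subseteq> ?C"
  proof
    fix y assume "y \<in> S"
    then have "(\<Sum>x\<in>S. (if x = y then 1 else 0) *\<^sub>R x) = (\<Sum>x\<in>S. if x = y then y else 0)"
      by (intro sum.cong) auto
    also have "\<dots> = y" using assms \<open>y \<in> S\<close> by simp
    finally have "(\<Sum>x\<in>S. (if x = y then 1 else 0) *\<^sub>R x) = y" .
    then show "y \<in> ?C"
      by (intro CollectI exI[of _ "\<lambda>x. if x = y then 1 else 0"]) auto
  qed
  show "convex_cone ?C"
    unfolding convex_cone_iff
  proof (intro conjI ballI allI impI)
    show "0 \<in> ?C" by (rule CollectI, rule exI[of _ "\<lambda>_. 0"]) simp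
  next
    fix x y assume "x \<in> ?C" "y \<in> ?C"
    then obtain c d where "x = (\<Sum>x\<in>S. c x *\<^sub>R x)" "\<forall>x\<in>S. 0 \<le> c x"
      "y = (\<Sum>x\<in>S. d x *\<^sub>R x)" "\<forall>x\<in>S. 0 \<le> d x" by auto
    then show "x + y \<in> ?C"
      by (intro CollectI exI[of _ "\<lambda>x. c x + d x"]) (simp add: sum.distrib scaleR_add_left)
  next
    fix x and a :: real assume "x \<in> ?C" "0 \<le> a"
    then obtain c where "x = (\<Sum>x\<in>S. c x *\<^sub>R x)" "\<forall>x\<in>S. 0 \<le> c x" by auto
    then show "a *\<^sub>R x \<in> ?C"
      using \<open>0 \<le> a\<close> by (intro CollectI exI[of _ "\<lambda>x. a * c x"]) (simp add: scaleR_sum_right)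
  qed
  fix T assume "S \<subseteq> T" "convex_cone T"
  then show "?C \<subseteq> T"
    by (auto intro!: convex_cone_sum convex_cone_scaleR)
qed

lemma convex_cone_hull_singleton: "convex_cone hull {a} = {t *\<^sub>R a | t. 0 \<le> t}"
  by (auto simp: convex_cone_hull_finite)

lemma convex_cone_hull_singleton_scaleR:
  assumes "0 < c"
  shows "convex_cone hull {c *\<^sub>R a} = convex_cone hull {a}"
  unfolding convex_cone_hull_singleton
proof safe
  fix t :: real assume "0 \<le> t"
  then show "\<exists>s. t *\<^sub>R c *\<^sub>R a = s *\<^sub>R a \<and> 0 \<le> s"
    using assms by (intro exI[of _ "t * c"]) auto
next
  fix t :: real assume "0 \<le> t"
  then show "\<exists>s. t *\<^sub>R a = s *\<^sub>R c *\<^sub>R a \<and> 0 \<le> s"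
    using assms by (intro exI[of _ "t / c"]) auto
qed

definition is_basis :: "'a::euclidean_space set \<Rightarrow> bool" where
  "is_basis B \<longleftrightarrow> finite B \<and> card B = DIM('a) \<and> span B = UNIV"

lemma dual_basis_exists:
  assumes "is_basis B" "b \<in> B"
  shows "\<exists>z. \<forall>b'\<in>B. z \<bullet> b' = (if b' = b then 1 else 0)"
proof -
  have fin: "finite B" and cB: "card B = DIM('a)" and sp: "span B = UNIV"
    using assms(1) by (auto simp: is_basis_def)
  have "dim (B - {b}) \<le> card (B - {b})" using fin by (simp add: dim_le_card')
  also have "\<dots> < DIM('a)" using cB assms(2) fin by (simp add: card_Diff_singleton)
  finally have "span (B - {b}) \<noteq> UNIV"
    by (metis dim_UNIV dim_span order.irrefl)
  then obtain a :: 'a where a: "a \<noteq> 0" "\<forall>x\<in>span (B - {b}). a \<bullet> x = 0"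
    using span_not_UNIV_orthogonal by blast
  have ab: "a \<bullet> b \<noteq> 0"
  proof
    assume "a \<bullet> b = 0"
    then have "\<forall>x\<in>B. a \<bullet> x = 0" using a(2) span_base[of _ "B - {b}"] by blast
    then have "\<forall>x\<in>span B. a \<bullet> x = 0"
      using orthogonal_to_span[of _ B a] unfolding orthogonal_def by blast
    then have "a \<bullet> a = 0" using sp by auto
    then show False using a(1) by simp
  qed
  show ?thesis
  proof (intro exI[of _ "a /\<^sub>R (a \<bullet> b)"] ballI)
    fix b' assume "b' \<in> B"
    then show "(a /\<^sub>R (a \<bullet> b)) \<bullet> b' = (if b' = b then 1 else 0)"
      using ab a(2) by (auto simp: span_base)
  qed
qed

definition dual_basis :: "'a::euclidean_space set \<Rightarrow> 'a \<Rightarrow> 'a" where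
  "dual_basis B b = (SOME z. \<forall>b'\<in>B. z \<bullet> b' = (if b' = b then 1 else 0))"

lemma inner_dual_basis:
  "is_basis B \<Longrightarrow> b \<in> B \<Longrightarrow> b' \<in> B \<Longrightarrow> dual_basis B b \<bullet> b' = (if b' = b then 1 else 0)"
  unfolding dual_basis_def by (rule someI_ex[OF dual_basis_exists, rule_format])

lemma basis_expansion:
  assumes "is_basis B"
  shows "u = (\<Sum>b\<in>B. (dual_basis B b \<bullet> u) *\<^sub>R b)"
proof -
  have fin: "finite B" and sp: "span B = UNIV" using assms by (auto simp: is_basis_def)
  obtain c where u: "u = (\<Sum>b\<in>B. c b *\<^sub>R b)"
    using span_finite[OF fin] sp by (metis (no_types, lifting) UNIV_I imageE)
  have "dual_basis B b \<bullet> u = c b" if "b \<in> B" for b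
  proof -
    have "dual_basis B b \<bullet> u = (\<Sum>b'\<in>B. c b' * (dual_basis B b \<bullet> b'))"
      by (simp add: u inner_sum_right)
    also have "\<dots> = (\<Sum>b'\<in>B. if b' = b then c b else 0)"
      by (rule sum.cong) (auto simp: inner_dual_basis[OF assms that])
    also have "\<dots> = c b" using fin that by simp
    finally show ?thesis .
  qed
  then show ?thesis by (simp add: u cong: sum.cong)
qed

lemma dual_basis_expansion:
  assumes "is_basis B"
  shows "x = (\<Sum>b\<in>B. (x \<bullet> b) *\<^sub>R dual_basis B b)"
proof -
  have fin: "finite B" using assms by (auto simp: is_basis_def)
  define y where "y = x - (\<Sum>b\<in>B. (x \<bullet> b) *\<^sub>R dual_basis B b)"
  have yb: "y \<bullet> b' = 0" if "b' \<in> B" for b'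
  proof -
    have "(\<Sum>b\<in>B. (x \<bullet> b) *\<^sub>R dual_basis B b) \<bullet> b' = (\<Sum>b\<in>B. if b = b' then x \<bullet> b' else 0)"
      unfolding inner_sum_left by (rule sum.cong) (auto simp: inner_dual_basis[OF assms _ that])
    then show ?thesis using fin that by (simp add: y_def inner_diff_left)
  qed
  have "y \<bullet> y = (\<Sum>b\<in>B. (dual_basis B b \<bullet> y) * (y \<bullet> b))"
    by (subst (2) basis_expansion[OF assms, of y]) (simp add: inner_sum_right)
  also have "\<dots> = 0" by (simp add: yb)
  finally show ?thesis by (simp add: y_def)
qed

lemma convex_cone_hull_basis:
  assumes "is_basis B"
  shows "convex_cone hull B = {u. \<forall>b\<in>B. 0 \<le> dual_basis B b \<bullet> u}"
proof -
  have fin: "finite B" using assms by (auto simp: is_basis_def)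
  show ?thesis
  proof safe
    fix u b assume "u \<in> convex_cone hull B" "b \<in> B"
    then obtain c where u: "u = (\<Sum>x\<in>B. c x *\<^sub>R x)" "\<forall>x\<in>B. 0 \<le> c x"
      using fin by (auto simp: convex_cone_hull_finite)
    have "dual_basis B b \<bullet> u = (\<Sum>x\<in>B. if x = b then c b else 0)"
      unfolding u(1) inner_sum_right
      by (rule sum.cong) (auto simp: inner_dual_basis[OF assms \<open>b \<in> B\<close>])
    then show "0 \<le> dual_basis B b \<bullet> u" using fin \<open>b \<in> B\<close> u(2) by simp
  next
    fix u assume "\<forall>b\<in>B. 0 \<le> dual_basis B b \<bullet> u"
    then show "u \<in> convex_cone hull B"
      using fin basis_expansion[OF assms, of u] by (auto simp: convex_cone_hull_finite)
  qed
qed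

lemma independent_scaleR_eq:
  assumes "independent B" "b \<in> B" "b' \<in> B" "b' = c *\<^sub>R b"
  shows "b = b'"
proof (rule ccontr)
  assume "b \<noteq> b'"
  then have "b' \<in> span (B - {b'})" using assms(2,4) by (simp add: span_base span_mul)
  then show False using assms(1,3) dependent_def by blast
qed

lemma dim_convex_cone_hull_singleton:
  fixes b :: "'a::euclidean_space"
  assumes "b \<noteq> 0"
  shows "dim (convex_cone hull {b}) = 1"
proof -
  have "dim {b} \<le> dim (convex_cone hull {b})" by (rule dim_subset) (simp add: hull_inc)
  moreover have "convex_cone hull {b} \<subseteq> span {b}"
    by (auto simp: convex_cone_hull_singleton span_mul span_base)
  then have "dim (convex_cone hull {b}) \<le> dim (span {b})" by (rule dim_subset)
  ultimately show ?thesis using assms by simp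
qed

lemma convex_cone_hull_basis_vector_face_of:
  assumes B: "is_basis B" and b: "b \<in> B"
  shows "convex_cone hull {b} face_of convex_cone hull B"
proof -
  let ?C = "convex_cone hull B"
  have fin: "finite B" using B by (simp add: is_basis_def)
  have C: "?C = {u. \<forall>b\<in>B. 0 \<le> dual_basis B b \<bullet> u}" by (rule convex_cone_hull_basis[OF B])
  define a where "a = - (\<Sum>b'\<in>B - {b}. dual_basis B b')"
  have "a \<bullet> x \<le> 0" if "x \<in> ?C" for x
    using that C by (auto simp: a_def inner_sum_left intro!: sum_nonneg)
  then have face: "(?C \<inter> {x. a \<bullet> x = 0}) face_of ?C"
    by (intro face_of_Int_supporting_hyperplane_le convex_convex_cone_hull) auto
  have "?C \<inter> {x. a \<bullet> x = 0} = convex_cone hull {b}"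
  proof safe
    fix x assume xC: "x \<in> ?C" and ax: "a \<bullet> x = 0"
    have "(\<Sum>b'\<in>B - {b}. dual_basis B b' \<bullet> x) = 0" using ax by (simp add: a_def inner_sum_left)
    then have z0: "\<forall>b'\<in>B - {b}. dual_basis B b' \<bullet> x = 0"
      using xC C fin by (subst (asm) sum_nonneg_eq_0_iff) auto
    have "x = (\<Sum>b'\<in>B. (dual_basis B b' \<bullet> x) *\<^sub>R b')" by (rule basis_expansion[OF B])
    also have "\<dots> = (\<Sum>b'\<in>B. if b' = b then (dual_basis B b \<bullet> x) *\<^sub>R b else 0)"
      by (rule sum.cong) (use z0 in auto)
    also have "\<dots> = (dual_basis B b \<bullet> x) *\<^sub>R b" using fin b by simp
    finally show "x \<in> convex_cone hull {b}"
      using xC C b by (auto simp: convex_cone_hull_singleton)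
  next
    fix x assume "x \<in> convex_cone hull {b}"
    then obtain t where t: "x = t *\<^sub>R b" "0 \<le> t" by (auto simp: convex_cone_hull_singleton)
    show "x \<in> ?C" using t b by (simp add: convex_cone_hull_mul hull_inc)
    have "dual_basis B b' \<bullet> b = 0" if "b' \<in> B - {b}" for b'
      using inner_dual_basis[OF B, of b' b] that b by auto
    then show "a \<bullet> x = 0" by (simp add: t a_def inner_sum_left)
  qed
  then show ?thesis using face by simp
qed

lemma is_basis_rescale:
  assumes B: "is_basis B" and w: "\<And>b. b \<in> B \<Longrightarrow> 0 < \<tau> b \<and> \<tau> b *\<^sub>R w b = b"
  shows "inj_on w B" and "is_basis (w ` B)"
    and "convex_cone hull (w ` B) = convex_cone hull B"
proof -
  have finB: "finite B" and cB: "card B = DIM('a)" and spB: "span B = UNIV"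
    using B by (auto simp: is_basis_def)
  have indB: "independent B"
    using card_eq_dim[of B UNIV] finB cB spB by simp
  have wb: "w b = (1 / \<tau> b) *\<^sub>R b" if "b \<in> B" for b
    using w[OF that] by (metis less_irrefl scaleR_one scaleR_scaleR nonzero_divide_eq_eq)
  show inj: "inj_on w B"
  proof (rule inj_onI)
    fix b b' assume bb: "b \<in> B" "b' \<in> B" "w b = w b'"
    have "b' = \<tau> b' *\<^sub>R w b'" using w[OF bb(2)] by simp
    also have "\<dots> = (\<tau> b' / \<tau> b) *\<^sub>R b" using wb[OF bb(1)] bb(3) by simp
    finally show "b = b'" using independent_scaleR_eq[OF indB bb(1,2)] by blast
  qed
  have "B \<subseteq> span (w ` B)"
    using w by (metis image_eqI span_base span_mul subsetI)
  then have "span (w ` B) = UNIV" using span_mono spB by (metis span_span top.extremum_uniqueI)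
  then show "is_basis (w ` B)" using card_image[OF inj] finB cB by (simp add: is_basis_def)
  show "convex_cone hull (w ` B) = convex_cone hull B"
  proof (rule antisym; rule hull_minimal)
    show "w ` B \<subseteq> convex_cone hull B"
    proof
      fix y assume "y \<in> w ` B"
      then obtain b where b: "b \<in> B" "y = (1 / \<tau> b) *\<^sub>R b" using wb by auto
      have "0 \<le> 1 / \<tau> b" using w[OF b(1)] by simp
      then show "y \<in> convex_cone hull B" using b by (simp add: convex_cone_hull_mul hull_inc)
    qed
    show "B \<subseteq> convex_cone hull (w ` B)"
      using w by (metis convex_cone_hull_mul hull_inc image_eqI less_imp_le subsetI)
  qed (simp_all add: convex_cone_convex_cone_hull)
qed

lemma face_of_midpoint:
  assumes "T face_of S" "a \<in> S" "b \<in> S" "midpoint a b \<in> T"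
  shows "a \<in> T"
proof (cases "a = b")
  case False
  then have "midpoint a b \<in> open_segment a b" by simp
  then show ?thesis using face_ofD[OF assms(1) _ assms(2,3) assms(4)] by blast
qed (use assms(4) in simp)

section \<open>Support functions and normal fans\<close>

lemma support_fun_eqI:
  assumes "y \<in> P" "\<And>x. x \<in> P \<Longrightarrow> x \<bullet> u \<le> y \<bullet> u"
  shows "support_fun P u = y \<bullet> u"
  unfolding support_fun_def by (rule cSup_eq_maximum) (use assms in auto)

lemma support_fun_attained:
  fixes P :: "'a::euclidean_space set"
  assumes "compact P" "P \<noteq> {}"
  obtains y where "y \<in> P" "y \<bullet> u = support_fun P u" "\<And>x. x \<in> P \<Longrightarrow> x \<bullet> u \<le> y \<bullet> u"
proof -
  have "compact ((\<lambda>x. x \<bullet> u) ` P)"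
    by (rule compact_continuous_image[OF _ assms(1)]) (intro continuous_intros)
  then obtain y where "y \<in> P" "\<forall>x\<in>P. x \<bullet> u \<le> y \<bullet> u"
    using compact_attains_sup[of "(\<lambda>x. x \<bullet> u) ` P"] assms(2) by auto
  then show ?thesis using support_fun_eqI[of y P u] that by auto
qed

lemma support_fun_ge:
  fixes P :: "'a::euclidean_space set"
  assumes "compact P" "x \<in> P"
  shows "x \<bullet> u \<le> support_fun P u"
  using support_fun_attained[OF assms(1), of u] assms(2) by force

lemma support_fun_diff_le:
  fixes P :: "'a::euclidean_space set"
  assumes "compact P" "P \<noteq> {}" "\<And>x. x \<in> P \<Longrightarrow> norm x \<le> R"
  shows "support_fun P u - support_fun P u' \<le> R * norm (u - u')"
proof -
  obtain x where x: "x \<in> P" "x \<bullet> u = support_fun P u"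
    using support_fun_attained[OF assms(1,2)] by metis
  have "x \<bullet> u' \<le> support_fun P u'" using support_fun_ge[OF assms(1) x(1)] .
  moreover have "x \<bullet> (u - u') \<le> norm x * norm (u - u')"
    by (rule order_trans[OF _ norm_cauchy_schwarz]) simp
  moreover have "norm x * norm (u - u') \<le> R * norm (u - u')"
    using assms(3)[OF x(1)] by (simp add: mult_right_mono)
  ultimately show ?thesis using x(2) by (simp add: inner_diff_right)
qed

lemma continuous_on_support_fun:
  fixes P :: "'a::euclidean_space set"
  assumes "compact P" "P \<noteq> {}"
  shows "continuous_on UNIV (support_fun P)"
proof -
  obtain R where R: "0 \<le> R" "\<And>x. x \<in> P \<Longrightarrow> norm x \<le> R"
    using compact_imp_bounded[OF assms(1)] by (metis bounded_pos less_imp_le)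
  have "R-lipschitz_on UNIV (support_fun P)"
  proof (rule lipschitz_onI)
    fix x y :: 'a
    show "dist (support_fun P x) (support_fun P y) \<le> R * dist x y"
      using support_fun_diff_le[OF assms R(2), of x y] support_fun_diff_le[OF assms R(2), of y x]
      by (simp add: dist_real_def dist_norm abs_le_iff norm_minus_commute)
  qed (use R in auto)
  then show ?thesis by (rule lipschitz_on_continuous_on)
qed

lemma maximal_face_normal_cone:
  fixes P :: "'a::euclidean_space set" and u :: 'a
  assumes "is_polytope P"
  defines "G \<equiv> P \<inter> {x. u \<bullet> x = support_fun P u}"
  shows "G face_of P" "G \<noteq> {}" "u \<in> normal_cone P G"
proof -
  have cp: "compact P" "P \<noteq> {}" "convex P" using assms(1)
    by (auto simp: is_polytope_def polytope_imp_compact polytope_imp_convex)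
  obtain y where y: "y \<in> P" "y \<bullet> u = support_fun P u"
    using support_fun_attained[OF cp(1,2)] by metis
  show "G face_of P" unfolding G_def
    by (rule face_of_Int_supporting_hyperplane_le)
      (use cp support_fun_ge in \<open>auto simp: inner_commute\<close>)
  show "G \<noteq> {}" using y by (auto simp: G_def inner_commute)
  show "u \<in> normal_cone P G" by (auto simp: G_def normal_cone_def inner_commute)
qed

lemma Union_normal_fan:
  fixes P :: "'a::euclidean_space set"
  assumes "is_polytope P"
  shows "\<Union>(normal_fan P) = UNIV"
  using maximal_face_normal_cone[OF assms] by (fastforce simp: normal_fan_def)

section \<open>Least squares over a closed convex cone\<close>

lemma span_convex_cone_diff:
  assumes K: "convex_cone K" and w: "w \<in> span K"
  shows "\<exists>p\<in>K. \<exists>q\<in>K. w = p - q"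
proof -
  let ?S = "{p - q | p q. p \<in> K \<and> q \<in> K}"
  have "subspace ?S"
    unfolding subspace_def
  proof (intro conjI allI impI ballI)
    show "0 \<in> ?S" using convex_cone_contains_0[OF K] by (intro CollectI exI[of _ 0]) auto
  next
    fix x y assume "x \<in> ?S" "y \<in> ?S"
    then obtain p q p' q' where "x = p - q" "y = p' - q'" "p \<in> K" "q \<in> K" "p' \<in> K" "q' \<in> K"
      by blast
    then show "x + y \<in> ?S"
      using convex_cone_add[OF K] by (intro CollectI exI[of _ "p + p'"] exI[of _ "q + q'"]) auto
  next
    fix c :: real and x assume "x \<in> ?S"
    then obtain p q where pq: "x = p - q" "p \<in> K" "q \<in> K" by blast
    show "c *\<^sub>R x \<in> ?S"
    proof (cases "0 \<le> c")
      case True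
      then show ?thesis using pq convex_cone_scaleR[OF K]
        by (intro CollectI exI[of _ "c *\<^sub>R p"] exI[of _ "c *\<^sub>R q"]) (auto simp: scaleR_diff_right)
    next
      case False
      then show ?thesis using pq convex_cone_scaleR[OF K, of "- c"]
        by (intro CollectI exI[of _ "(- c) *\<^sub>R q"] exI[of _ "(- c) *\<^sub>R p"])
          (auto simp: scaleR_diff_right)
    qed
  qed
  moreover have "K \<subseteq> ?S" using convex_cone_contains_0[OF K] by force
  ultimately have "span K \<subseteq> ?S" by (rule span_minimal[rotated])
  then show ?thesis using w by blast
qed

lemma compact_pos_lower_bound:
  fixes g :: "'b::metric_space \<Rightarrow> real"
  assumes "compact T" "continuous_on T g" "\<And>w. w \<in> T \<Longrightarrow> 0 < g w"
  shows "\<exists>c>0. \<forall>w\<in>T. c \<le> g w"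
proof (cases "T = {}")
  case False
  then obtain w0 where "w0 \<in> T" "\<forall>w\<in>T. g w0 \<le> g w"
    using continuous_attains_inf[OF assms(1) _ assms(2)] by blast
  then show ?thesis using assms(3) by blast
qed (auto intro: exI[of _ 1])

lemma quadratic_form_coercive_on_subspace:
  fixes S :: "'b::euclidean_space set" and a :: "nat \<Rightarrow> 'b \<Rightarrow> real"
  assumes S: "subspace S" and lin: "\<And>k. linear (a k)"
    and ker: "\<And>w. w \<in> S \<Longrightarrow> \<forall>k<m. a k w = 0 \<Longrightarrow> w = 0"
  shows "\<exists>c>0. \<forall>w\<in>S. c * (norm w)\<^sup>2 \<le> (\<Sum>k<m. (a k w)\<^sup>2)"
proof -
  define g where "g w = (\<Sum>k<m. (a k w)\<^sup>2)" for w
  have g_scale: "g (c *\<^sub>R w) = c\<^sup>2 * g w" for c w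
    using lin by (simp add: g_def linear_scale power_mult_distrib sum_distrib_left)
  have g_pos: "0 < g w" if "w \<in> S" "w \<noteq> 0" for w
  proof -
    have "\<exists>k<m. a k w \<noteq> 0" using ker that by blast
    then have "g w \<noteq> 0" by (auto simp: g_def sum_nonneg_eq_0_iff)
    moreover have "0 \<le> g w" by (simp add: g_def sum_nonneg)
    ultimately show ?thesis by simp
  qed
  have "continuous_on A (a k)" for A k
    using lin by (simp add: linear_continuous_on linear_conv_bounded_linear)
  then have "continuous_on (S \<inter> sphere 0 1) g"
    unfolding g_def by (intro continuous_intros)
  moreover have "compact (S \<inter> sphere 0 1)"
    by (intro closed_Int_compact closed_subspace S compact_sphere)
  ultimately obtain c where c: "c > 0" "\<forall>w\<in>S \<inter> sphere 0 1. c \<le> g w"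
    using compact_pos_lower_bound[of "S \<inter> sphere 0 1" g] g_pos by force
  \<comment> \<open>by homogeneity it suffices to bound \<open>g\<close> on the unit sphere\<close>
  have "c * (norm w)\<^sup>2 \<le> g w" if w: "w \<in> S" for w
  proof (cases "w = 0")
    case True then show ?thesis using lin by (simp add: g_def linear_0)
  next
    case False
    have "(1 / norm w) *\<^sub>R w \<in> S \<inter> sphere 0 1" using S w False by (simp add: subspace_scale)
    then have "c \<le> g ((1 / norm w) *\<^sub>R w)" using c(2) by blast
    also have "\<dots> = g w / (norm w)\<^sup>2" by (simp add: g_scale power_divide)
    finally show ?thesis using False by (simp add: field_simps)
  qed
  then show ?thesis using c(1) unfolding g_def by blast
qed

lemma injective_on_cone_imp_coercive:
  fixes K :: "'b::euclidean_space set" and a :: "nat \<Rightarrow> 'b \<Rightarrow> real"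
  assumes K: "convex_cone K" and lin: "\<And>k. linear (a k)"
    and inj: "\<And>h h'. h \<in> K \<Longrightarrow> h' \<in> K \<Longrightarrow> \<forall>k<m. a k h = a k h' \<Longrightarrow> h = h'"
  shows "\<exists>c>0. \<forall>h\<in>K. \<forall>h'\<in>K. c * (norm (h - h'))\<^sup>2 \<le> (\<Sum>k<m. (a k h - a k h')\<^sup>2)"
proof -
  have ker: "w = 0" if w: "w \<in> span K" "\<forall>k<m. a k w = 0" for w
  proof -
    obtain p q where "p \<in> K" "q \<in> K" "w = p - q"
      using span_convex_cone_diff[OF K w(1)] by blast
    then have "\<forall>k<m. a k p = a k q" using w(2) lin by (simp add: linear_diff)
    then show ?thesis using inj[OF \<open>p \<in> K\<close> \<open>q \<in> K\<close>] \<open>w = p - q\<close> by simp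
  qed
  obtain c where c: "c > 0" "\<forall>w\<in>span K. c * (norm w)\<^sup>2 \<le> (\<Sum>k<m. (a k w)\<^sup>2)"
    using quadratic_form_coercive_on_subspace[of "span K" a m, OF subspace_span lin ker] by blast
  show ?thesis
  proof (intro exI[of _ c] conjI ballI)
    fix h h' assume "h \<in> K" "h' \<in> K"
    then have "h - h' \<in> span K" by (simp add: span_base span_diff)
    then have "c * (norm (h - h'))\<^sup>2 \<le> (\<Sum>k<m. (a k (h - h'))\<^sup>2)" using c(2) by blast
    then show "c * (norm (h - h'))\<^sup>2 \<le> (\<Sum>k<m. (a k h - a k h')\<^sup>2)"
      by (simp add: linear_diff[OF lin])
  qed (rule c(1))
qed

lemma power2_le_twice_diff_plus: "(x::real)\<^sup>2 \<le> 2 * (x - y)\<^sup>2 + 2 * y\<^sup>2"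
proof -
  have "2 * (x - y)\<^sup>2 + 2 * y\<^sup>2 - x\<^sup>2 = (x - 2 * y)\<^sup>2"
    by (simp add: power2_eq_square algebra_simps)
  then show ?thesis using zero_le_power2[of "x - 2 * y"] by linarith
qed

lemma least_squares_exists:
  fixes K :: "'b::euclidean_space set" and a :: "nat \<Rightarrow> 'b \<Rightarrow> real"
  assumes K: "convex_cone K" "closed K" and lin: "\<And>k. linear (a k)"
    and inj: "\<And>h h'. h \<in> K \<Longrightarrow> h' \<in> K \<Longrightarrow> \<forall>k<m. a k h = a k h' \<Longrightarrow> h = h'"
  shows "\<exists>h\<in>K. \<forall>h'\<in>K. (\<Sum>k<m. (a k h - y k)\<^sup>2) \<le> (\<Sum>k<m. (a k h' - y k)\<^sup>2)"
proof -
  define Q where "Q h = (\<Sum>k<m. (a k h - y k)\<^sup>2)" for h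
  obtain c where c: "c > 0" "\<forall>h\<in>K. \<forall>h'\<in>K. c * (norm (h - h'))\<^sup>2 \<le> (\<Sum>k<m. (a k h - a k h')\<^sup>2)"
    using injective_on_cone_imp_coercive[of K a m, OF K(1) lin inj] by blast
  define R where "R = 2 * Q 0 + 2 * (\<Sum>k<m. (y k)\<^sup>2)"
  \<comment> \<open>it suffices to minimize over the compact sublevel set \<open>?S\<close>\<close>
  let ?S = "K \<inter> {h. Q h \<le> Q 0}"
  have "norm h \<le> sqrt (R / c)" if h: "h \<in> ?S" for h
  proof -
    have "c * (norm h)\<^sup>2 \<le> (\<Sum>k<m. (a k h)\<^sup>2)"
      using c(2)[rule_format, of h 0] h convex_cone_contains_0[OF K(1)] lin by (simp add: linear_0)
    also have "\<dots> \<le> (\<Sum>k<m. 2 * (a k h - y k)\<^sup>2 + 2 * (y k)\<^sup>2)"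
      by (intro sum_mono power2_le_twice_diff_plus)
    also have "\<dots> = 2 * Q h + 2 * (\<Sum>k<m. (y k)\<^sup>2)"
      by (simp add: Q_def sum.distrib sum_distrib_left)
    also have "\<dots> \<le> R" using h by (simp add: R_def)
    finally show ?thesis using c(1) by (simp add: real_le_rsqrt field_simps)
  qed
  then have "bounded ?S" unfolding bounded_iff by blast
  moreover have "continuous_on A (a k)" for A k
    using lin by (simp add: linear_continuous_on linear_conv_bounded_linear)
  then have contQ: "continuous_on A Q" for A
    unfolding Q_def by (intro continuous_intros)
  then have "closed ?S"
    using K(2) by (intro closed_Int closed_Collect_le continuous_on_const)
  ultimately have "compact ?S" by (simp add: compact_eq_bounded_closed)
  moreover have "?S \<noteq> {}" using convex_cone_contains_0[OF K(1)] by auto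
  ultimately obtain h where h: "h \<in> ?S" "\<forall>h'\<in>?S. Q h \<le> Q h'"
    using continuous_attains_inf[OF _ _ contQ] by meson
  then have "\<forall>h'\<in>K. Q h \<le> Q h'" by force
  then show ?thesis using h(1) unfolding Q_def by blast
qed

lemma least_squares_minimizer_unique:
  fixes K :: "'b::euclidean_space set" and a :: "nat \<Rightarrow> 'b \<Rightarrow> real"
  assumes K: "convex K" and lin: "\<And>k. linear (a k)"
    and inj: "\<And>h h'. h \<in> K \<Longrightarrow> h' \<in> K \<Longrightarrow> \<forall>k<m. a k h = a k h' \<Longrightarrow> h = h'"
    and p: "p \<in> K" "\<forall>z\<in>K. (\<Sum>k<m. (a k p - y k)\<^sup>2) \<le> (\<Sum>k<m. (a k z - y k)\<^sup>2)"
    and q: "q \<in> K" "\<forall>z\<in>K. (\<Sum>k<m. (a k q - y k)\<^sup>2) \<le> (\<Sum>k<m. (a k z - y k)\<^sup>2)"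
  shows "p = q"
proof -
  define Q where "Q h = (\<Sum>k<m. (a k h - y k)\<^sup>2)" for h
  define mid where "mid = (1/2) *\<^sub>R p + (1/2) *\<^sub>R q"
  have "mid \<in> K" using p q K by (simp add: mid_def convexD)
  then have "Q p \<le> Q mid" using p by (simp add: Q_def)
  moreover have "Q p \<le> Q q" "Q q \<le> Q p" using p q by (simp_all add: Q_def)
  \<comment> \<open>parallelogram identity for each residual\<close>
  moreover have "(a k mid - y k)\<^sup>2 = ((a k p - y k)\<^sup>2 + (a k q - y k)\<^sup>2) / 2 - (a k p - a k q)\<^sup>2 / 4" for k
    using lin by (simp add: mid_def linear_add linear_scale power2_eq_square field_simps)
  then have "Q mid = (Q p + Q q) / 2 - (\<Sum>k<m. (a k p - a k q)\<^sup>2) / 4"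
    by (simp add: Q_def sum_subtractf sum_divide_distrib[symmetric] sum.distrib)
  ultimately have "(\<Sum>k<m. (a k p - a k q)\<^sup>2) \<le> 0" by simp
  then have "(\<Sum>k<m. (a k p - a k q)\<^sup>2) = 0" by (simp add: antisym sum_nonneg)
  then have "\<forall>k<m. a k p = a k q" by (simp add: sum_nonneg_eq_0_iff)
  then show "p = q" by (rule inj[OF p(1) q(1)])
qed

lemma strictly_diagonally_dominant_kernel:
  fixes w :: "real^'n" and c :: "'n \<Rightarrow> 'n \<Rightarrow> real"
  assumes row: "\<And>i. (\<Sum>j\<in>UNIV. c i j * w $ j) = 0" and diag: "\<And>i. \<alpha> \<le> c i i"
    and off: "\<And>i j. j \<noteq> i \<Longrightarrow> \<bar>c i j\<bar> \<le> e" and lt: "real CARD('n) * e < \<alpha>" and e0: "0 \<le> e"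
  shows "w = 0"
proof -
  have "Max (range (\<lambda>j. \<bar>w $ j\<bar>)) \<in> range (\<lambda>j. \<bar>w $ j\<bar>)" by (rule Max_in) auto
  then obtain i0 where "Max (range (\<lambda>j. \<bar>w $ j\<bar>)) = \<bar>w $ i0\<bar>" by (rule rangeE)
  then have i0: "\<bar>w $ i0\<bar> = Max (range (\<lambda>j. \<bar>w $ j\<bar>))" by simp
  have mx: "\<bar>w $ j\<bar> \<le> \<bar>w $ i0\<bar>" for j using i0 by simp
  have "c i0 i0 * w $ i0 + (\<Sum>j\<in>UNIV - {i0}. c i0 j * w $ j) = 0"
    using row[of i0] by (simp add: sum.remove[of UNIV i0])
  then have "\<bar>c i0 i0 * w $ i0\<bar> = \<bar>\<Sum>j\<in>UNIV - {i0}. c i0 j * w $ j\<bar>" by linarith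
  also have "\<dots> \<le> (\<Sum>j\<in>UNIV - {i0}. \<bar>c i0 j\<bar> * \<bar>w $ j\<bar>)"
    by (rule order_trans[OF sum_abs]) (simp add: abs_mult)
  also have "\<dots> \<le> (\<Sum>j\<in>UNIV - {i0}. e * \<bar>w $ i0\<bar>)"
    by (intro sum_mono mult_mono off mx) (auto simp: e0)
  also have "\<dots> \<le> (\<Sum>j\<in>(UNIV::'n set). e * \<bar>w $ i0\<bar>)"
    by (rule sum_mono2) (auto simp: e0)
  also have "\<dots> = real CARD('n) * e * \<bar>w $ i0\<bar>" by simp
  finally have A: "\<bar>c i0 i0 * w $ i0\<bar> \<le> real CARD('n) * e * \<bar>w $ i0\<bar>" .
  have "0 \<le> real CARD('n) * e" using e0 by simp
  then have "0 \<le> \<alpha>" using lt by linarith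
  then have "\<alpha> * \<bar>w $ i0\<bar> \<le> \<bar>c i0 i0 * w $ i0\<bar>"
    using diag[of i0] by (simp add: abs_mult mult_right_mono)
  then have "(\<alpha> - real CARD('n) * e) * \<bar>w $ i0\<bar> \<le> 0" using A by (simp add: algebra_simps)
  then have "\<bar>w $ i0\<bar> \<le> 0" using lt by (simp add: mult_le_0_iff)
  then have "\<forall>j. w $ j = 0" using mx by (metis abs_le_zero_iff order_trans)
  then show ?thesis by (simp add: vec_eq_iff)
qed

section \<open>Independent uniform directions\<close>

lemma sets_uniform_sphere: "sets uniform_sphere = sets borel"
  by (simp add: uniform_sphere_def)

lemma space_uniform_sphere [simp]: "space uniform_sphere = UNIV"
  by (simp add: uniform_sphere_def)

lemma measurable_normalize_uniform_ball:
  "(\<lambda>x::'a::euclidean_space. x /\<^sub>R norm x) \<in> measurable (uniform_measure lborel (ball 0 1)) borel"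
proof -
  have "(\<lambda>x::'a. x /\<^sub>R norm x) \<in> borel_measurable borel" by measurable
  then show ?thesis by (subst measurable_cong_sets[of _ borel]) auto
qed

lemma prob_space_uniform_sphere: "prob_space (uniform_sphere :: 'a::euclidean_space measure)"
proof -
  have "0 < emeasure lborel (ball (0::'a) 1)" by (simp add: emeasure_ball)
  moreover have "emeasure lborel (ball (0::'a) 1) < \<infinity>" by (rule emeasure_lborel_ball_finite)
  ultimately have "prob_space (uniform_measure lborel (ball (0::'a) 1))"
    by (intro prob_space_uniform_measure) auto
  then show ?thesis
    unfolding uniform_sphere_def by (rule prob_space.prob_space_distr[OF _ measurable_normalize_uniform_ball])
qed

lemma product_prob_space_uniform_sphere:
  "product_prob_space (\<lambda>_. uniform_sphere :: 'a::euclidean_space measure)"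
  by (simp add: product_prob_space_def product_sigma_finite_def product_prob_space_axioms_def
      prob_space_uniform_sphere prob_space_imp_sigma_finite)

lemma measure_uniform_sphere_ball_pos:
  fixes c :: "'a::euclidean_space"
  assumes c: "norm c = 1" and d: "0 < d"
  shows "0 < measure uniform_sphere (ball c d)"
proof -
  let ?f = "\<lambda>x::'a. x /\<^sub>R norm x" and ?B = "ball (0::'a) 1"
  have "(?f \<longlongrightarrow> (c /\<^sub>R 2) /\<^sub>R norm (c /\<^sub>R 2)) (nhds (c /\<^sub>R 2))"
    using c by (intro tendsto_intros) (auto intro: filterlim_ident)
  moreover have "(c /\<^sub>R 2) /\<^sub>R norm (c /\<^sub>R 2) = c" using c by simp
  ultimately have "\<forall>\<^sub>F x in nhds (c /\<^sub>R 2). dist (?f x) c < d"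
    using d by (simp add: tendsto_iff)
  moreover have "\<forall>\<^sub>F x in nhds (c /\<^sub>R 2). x \<in> ?B"
    by (rule eventually_nhds_in_open) (use c in auto)
  ultimately have "\<forall>\<^sub>F x in nhds (c /\<^sub>R 2). x \<in> ?B \<inter> ?f -` ball c d"
    by eventually_elim (auto simp: dist_commute)
  then obtain r where r: "0 < r" "\<And>x. dist x (c /\<^sub>R 2) < r \<Longrightarrow> x \<in> ?B \<inter> ?f -` ball c d"
    unfolding eventually_nhds_metric by blast
  have f_meas: "?f \<in> borel_measurable borel" by measurable
  have sets: "?f -` ball c d \<in> sets lborel"
    using measurable_sets[OF f_meas, of "ball c d"] by simp
  have "0 < emeasure lborel (ball (c /\<^sub>R 2) r)" using r(1) by (simp add: emeasure_ball)
  also have "\<dots> \<le> emeasure lborel (?B \<inter> ?f -` ball c d)"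
    using r(2) sets by (intro emeasure_mono) (auto simp: dist_commute)
  finally have pos: "0 < emeasure lborel (?B \<inter> ?f -` ball c d)" .
  have "emeasure uniform_sphere (ball c d) = emeasure (uniform_measure lborel ?B) (?f -` ball c d)"
    unfolding uniform_sphere_def
    by (subst emeasure_distr[OF measurable_normalize_uniform_ball]) auto
  also have "\<dots> = emeasure lborel (?B \<inter> ?f -` ball c d) / emeasure lborel ?B"
    by (simp add: emeasure_uniform_measure[OF _ sets])
  finally have "0 < emeasure uniform_sphere (ball c d)"
    using pos emeasure_lborel_ball_finite[of 0 1] by (simp add: ennreal_zero_less_divide)
  then show ?thesis
    using finite_measure.emeasure_eq_measure[OF prob_space.finite_measure[OF prob_space_uniform_sphere],
        of "ball c d"]
    by simp
qed

lemma measurable_sample: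
  "k \<in> I \<Longrightarrow> (\<lambda>U. U k) \<in> borel_measurable (PiM I (\<lambda>_. uniform_sphere))"
  using measurable_component_singleton[of k I "\<lambda>_. uniform_sphere"]
  by (simp add: measurable_cong_sets[OF refl sets_uniform_sphere])

lemma sets_sample_in:
  assumes "k \<in> I" "B \<in> sets borel"
  shows "{U \<in> space (PiM I (\<lambda>_. uniform_sphere)). U k \<in> B} \<in> sets (PiM I (\<lambda>_. uniform_sphere))"
proof -
  have "(\<lambda>U. U k) -` B \<inter> space (PiM I (\<lambda>_. uniform_sphere)) \<in> sets (PiM I (\<lambda>_. uniform_sphere))"
    by (rule measurable_sets[OF measurable_sample[OF assms(1)] assms(2)])
  moreover have "{U \<in> space (PiM I (\<lambda>_. uniform_sphere)). U k \<in> B} =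
      (\<lambda>U. U k) -` B \<inter> space (PiM I (\<lambda>_. uniform_sphere))"
    by auto
  ultimately show ?thesis by simp
qed

lemma prob_all_hit_ge:
  fixes A :: "'n::finite \<Rightarrow> 'a::euclidean_space set" and m :: nat
  assumes A: "\<And>i. A i \<in> sets borel"
  defines "M \<equiv> PiM {..<m} (\<lambda>_. uniform_sphere :: 'a measure)"
  defines "H \<equiv> {U \<in> space M. \<forall>i. \<exists>k\<in>{..<m}. U k \<in> A i}"
  shows "1 - (\<Sum>i\<in>UNIV. (1 - measure uniform_sphere (A i)) ^ m) \<le> measure M H"
proof -
  interpret product_prob_space "\<lambda>_. uniform_sphere :: 'a measure" "{..<m}"
    by (rule product_prob_space_uniform_sphere)
  have "H \<in> sets M"
    unfolding H_def M_def
    by (intro sets.sets_Collect_countable_All sets.sets_Collect_countable_Ex' sets_sample_in A) auto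
  define miss where "miss i = {U \<in> space M. \<forall>k\<in>{..<m}. U k \<in> UNIV - A i}" for i
  have miss_sets: "miss i \<in> sets M" for i
    unfolding miss_def M_def using A
    by (intro sets.sets_Collect_countable_All' sets_sample_in) auto
  have measure_miss: "measure M (miss i) = (1 - measure uniform_sphere (A i)) ^ m" for i
  proof -
    have "emeasure M (miss i) = (\<Prod>k\<in>{..<m}. emeasure uniform_sphere (UNIV - A i))"
      unfolding miss_def M_def using A
      by (intro emeasure_PiM_Collect) (auto simp: sets_uniform_sphere)
    also have "emeasure uniform_sphere (UNIV - A i) = ennreal (1 - measure uniform_sphere (A i))"
      using prob_space.prob_compl[OF prob_space_uniform_sphere, of "A i"] A
      by (simp add: finite_measure.emeasure_eq_measure[OF prob_space.finite_measure[OF prob_space_uniform_sphere]]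
          sets_uniform_sphere)
    finally show ?thesis
      using prob_space.prob_le_1[OF prob_space_uniform_sphere, of "A i"] by (simp add: measure_def prod_ennreal ennreal_power)
  qed
  have "space M - H \<subseteq> (\<Union>i. miss i)" by (auto simp: H_def miss_def)
  then have "measure M (space M - H) \<le> measure M (\<Union>i. miss i)"
    using miss_sets by (intro P.finite_measure_mono[folded M_def]) auto
  also have "\<dots> \<le> (\<Sum>i\<in>UNIV. measure M (miss i))"
    using miss_sets by (intro P.finite_measure_subadditive_finite[folded M_def]) auto
  finally have "measure M (space M - H) \<le> (\<Sum>i\<in>UNIV. (1 - measure uniform_sphere (A i)) ^ m)"
    by (simp add: measure_miss)
  moreover have "measure M (space M - H) = 1 - measure M H"
    using P.prob_compl[folded M_def, OF \<open>H \<in> sets M\<close>] .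
  ultimately show ?thesis by simp
qed

lemma prob_all_hit_tendsto_1:
  fixes A :: "'n::finite \<Rightarrow> 'a::euclidean_space set"
  assumes A: "\<And>i. A i \<in> sets borel" and pos: "\<And>i. 0 < measure uniform_sphere (A i)"
  shows "(\<lambda>m. measure (PiM {..<m} (\<lambda>_. uniform_sphere))
            {U \<in> space (PiM {..<m} (\<lambda>_. uniform_sphere)). \<forall>i. \<exists>k\<in>{..<m}. U k \<in> A i}) \<longlonglongrightarrow> 1"
proof -
  let ?p = "\<lambda>m. measure (PiM {..<m} (\<lambda>_. uniform_sphere :: 'a measure))
      {U \<in> space (PiM {..<m} (\<lambda>_. uniform_sphere)). \<forall>i. \<exists>k\<in>{..<m}. U k \<in> A i}"
  have lower: "\<forall>\<^sub>F m in sequentially. 1 - (\<Sum>i\<in>UNIV. (1 - measure uniform_sphere (A i)) ^ m) \<le> ?p m"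
    using prob_all_hit_ge[of A, OF A] by simp
  have upper: "\<forall>\<^sub>F m in sequentially. ?p m \<le> 1"
    by (intro always_eventually allI prob_space.prob_le_1 prob_space_PiM prob_space_uniform_sphere)
  have "norm (1 - measure uniform_sphere (A i)) < 1" for i
    using pos[of i] prob_space.prob_le_1[OF prob_space_uniform_sphere, of "A i"] by simp
  then have "(\<lambda>m. 1 - (\<Sum>i\<in>UNIV. (1 - measure uniform_sphere (A i)) ^ m)) \<longlonglongrightarrow> 1 - (\<Sum>i\<in>(UNIV::'n set). 0)"
    by (intro tendsto_intros)
  then show ?thesis
    using tendsto_sandwich[OF lower upper _ tendsto_const] by simp
qed

section \<open>Chambers of a simplicial polytopal fan\<close>

locale simplicial_polytopal_fan =
  fixes F :: "'a::euclidean_space set set" and v :: "'n::finite \<Rightarrow> 'a"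
  assumes simplicial: "simplicial_fan F" and polytopal: "polytopal_fan F"
    and rays: "bij_betw (\<lambda>i. convex_cone hull {v i}) UNIV (fan_rays F)"
begin

definition ray :: "'n \<Rightarrow> 'a set" where "ray i = convex_cone hull {v i}"

definition gen_cone :: "'n set \<Rightarrow> 'a set" where "gen_cone J = convex_cone hull (v ` J)"

text \<open>The maximal cones of the fan, indexed by their sets of generators.\<close>

definition chamber :: "'n set \<Rightarrow> bool" where
  "chamber J \<longleftrightarrow> is_basis (v ` J) \<and> gen_cone J \<in> F"

definition chamber_dual :: "'n set \<Rightarrow> 'n \<Rightarrow> 'a" where
  "chamber_dual J j = dual_basis (v ` J) (v j)"

lemma face_in_F: "C \<in> F \<Longrightarrow> G face_of C \<Longrightarrow> G \<noteq> {} \<Longrightarrow> G \<in> F"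
  and Int_face_of_F: "C \<in> F \<Longrightarrow> D \<in> F \<Longrightarrow> (C \<inter> D) face_of C"
  and finite_F: "finite F"
  using simplicial by (auto simp: simplicial_fan_def is_fan_def)

lemma ray_in_F: "ray i \<in> F" and dim_ray: "dim (ray i) = 1"
  using rays by (auto simp: bij_betw_def ray_def fan_rays_def)

lemma ray_inj: "ray i = ray j \<Longrightarrow> i = j"
  using rays by (auto simp: bij_betw_def inj_on_def ray_def)

lemma ray_surj: "C \<in> F \<Longrightarrow> dim C = 1 \<Longrightarrow> \<exists>i. C = ray i"
  using rays by (auto simp: bij_betw_def ray_def fan_rays_def image_iff)

lemma generator_nonzero: "v i \<noteq> 0"
proof
  assume "v i = 0"
  then have "ray i = {0}" by (auto simp: ray_def convex_cone_hull_singleton)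
  then show False using dim_ray[of i] by simp
qed

lemma ray_eq: "ray i = {t *\<^sub>R v i | t. 0 \<le> t}"
  by (simp add: ray_def convex_cone_hull_singleton)

lemma generator_parallel_eq: "0 < c \<Longrightarrow> v k = c *\<^sub>R v i \<Longrightarrow> k = i"
  by (rule ray_inj) (simp add: ray_def convex_cone_hull_singleton_scaleR)

lemma inj_generators: "inj v"
  by (rule injI) (simp add: ray_inj ray_def)

lemma generator_in_gen_cone: "j \<in> J \<Longrightarrow> v j \<in> gen_cone J"
  by (simp add: gen_cone_def hull_inc)

lemma convex_gen_cone: "convex (gen_cone J)"
  by (simp add: gen_cone_def convex_convex_cone_hull)

lemma closed_gen_cone: "chamber J \<Longrightarrow> closed (gen_cone J)"
  unfolding gen_cone_def by (rule closed_convex_cone_hull) (simp add: chamber_def is_basis_def)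

lemma inner_chamber_dual:
  "chamber J \<Longrightarrow> j \<in> J \<Longrightarrow> k \<in> J \<Longrightarrow> chamber_dual J j \<bullet> v k = (if k = j then 1 else 0)"
  unfolding chamber_def chamber_dual_def
  using inj_generators by (subst inner_dual_basis) (auto simp: inj_def)

lemma chamber_expansion:
  assumes "chamber J"
  shows "u = (\<Sum>j\<in>J. (chamber_dual J j \<bullet> u) *\<^sub>R v j)"
proof -
  have "u = (\<Sum>b\<in>v ` J. (dual_basis (v ` J) b \<bullet> u) *\<^sub>R b)"
    using assms by (intro basis_expansion) (simp add: chamber_def)
  also have "\<dots> = (\<Sum>j\<in>J. (chamber_dual J j \<bullet> u) *\<^sub>R v j)"
    using inj_generators by (subst sum.reindex) (auto simp: chamber_dual_def inj_on_def inj_def)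
  finally show ?thesis .
qed

lemma chamber_dual_expansion:
  assumes "chamber J"
  shows "x = (\<Sum>j\<in>J. (x \<bullet> v j) *\<^sub>R chamber_dual J j)"
proof -
  have "x = (\<Sum>b\<in>v ` J. (x \<bullet> b) *\<^sub>R dual_basis (v ` J) b)"
    using assms by (intro dual_basis_expansion) (simp add: chamber_def)
  also have "\<dots> = (\<Sum>j\<in>J. (x \<bullet> v j) *\<^sub>R chamber_dual J j)"
    using inj_generators by (subst sum.reindex) (auto simp: chamber_dual_def inj_on_def inj_def)
  finally show ?thesis .
qed

lemma inner_chamber_expansion:
  "chamber J \<Longrightarrow> x \<bullet> u = (\<Sum>j\<in>J. (chamber_dual J j \<bullet> u) * (x \<bullet> v j))"
  by (subst chamber_expansion[of J u]) (auto simp: inner_sum_right)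

lemma gen_cone_chamber:
  assumes "chamber J"
  shows "gen_cone J = {u. \<forall>j\<in>J. 0 \<le> chamber_dual J j \<bullet> u}"
  using convex_cone_hull_basis[of "v ` J"] assms
  by (simp add: chamber_def gen_cone_def chamber_dual_def)

lemma full_dimensional_cone_is_chamber:
  assumes CF: "C \<in> F" and CB: "C = convex_cone hull B" and B: "is_basis B"
  shows "\<exists>J. chamber J \<and> C = gen_cone J"
proof -
  have "\<exists>i t. 0 < t \<and> t *\<^sub>R v i = b" if b: "b \<in> B" for b
  proof -
    have "b \<noteq> 0"
      using B b dependent_zero card_eq_dim[of B UNIV] by (auto simp: is_basis_def)
    moreover have "convex_cone hull {b} \<in> F"
      using face_in_F[OF CF _ convex_cone_hull_nonempty] convex_cone_hull_basis_vector_face_of[OF B b] CB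
      by simp
    ultimately obtain i where "convex_cone hull {b} = ray i"
      using ray_surj dim_convex_cone_hull_singleton by blast
    then obtain t where "b = t *\<^sub>R v i" "0 \<le> t"
      using hull_inc[of b "{b}"] by (auto simp: ray_eq)
    with \<open>b \<noteq> 0\<close> show ?thesis by (intro exI[of _ i] exI[of _ t]) auto
  qed
  then obtain \<phi> \<tau> where pt: "\<And>b. b \<in> B \<Longrightarrow> 0 < \<tau> b \<and> \<tau> b *\<^sub>R v (\<phi> b) = b"
    by metis
  have "v ` (\<phi> ` B) = (\<lambda>b. v (\<phi> b)) ` B" by auto
  then show ?thesis
    using is_basis_rescale[of B \<tau> "\<lambda>b. v (\<phi> b)", OF B pt] CF CB
    by (intro exI[of _ "\<phi> ` B"]) (simp add: chamber_def gen_cone_def)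
qed

lemma chamber_or_negligible:
  assumes CF: "C \<in> F"
  shows "(\<exists>J. chamber J \<and> C = gen_cone J) \<or> negligible C"
proof -
  obtain B where B: "independent B" "C = convex_cone hull B"
    using simplicial CF by (auto simp: simplicial_fan_def)
  have "card B \<le> DIM('a)" using independent_bound B by blast
  then consider "card B = DIM('a)" | "card B < DIM('a)" by linarith
  then show ?thesis
  proof cases
    case 1
    then have "is_basis B"
      using B(1) card_eq_dim[of B UNIV] finiteI_independent[OF B(1)]
      by (auto simp: is_basis_def)
    then show ?thesis using full_dimensional_cone_is_chamber[OF CF B(2)] by blast
  next
    case 2
    have "C \<subseteq> span B"
      using B(2) by (simp add: hull_minimal span_superset subspace_imp_convex_cone)
    moreover have "negligible (span B)"
      by (rule negligible_lowdim) (use 2 in \<open>simp add: dim_eq_card_independent[OF B(1)]\<close>)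
    ultimately show ?thesis using negligible_subset by blast
  qed
qed

text \<open>The fan covers space; off the closed union of the chambers it would have to be covered by
  finitely many negligible cones, so that union is everything.\<close>

lemma chambers_cover: "\<exists>J. chamber J \<and> u \<in> gen_cone J"
proof -
  obtain P0 where P0: "is_polytope P0" "F = normal_fan P0"
    using polytopal by (auto simp: polytopal_fan_def)
  have UF: "\<Union>F = UNIV" using Union_normal_fan[OF P0(1)] P0(2) by simp
  define M where "M = \<Union>{gen_cone J | J. chamber J}"
  define N where "N = \<Union>{C \<in> F. negligible C}"
  have "- M \<subseteq> N"
  proof
    fix x :: 'a assume "x \<in> - M"
    obtain C where "C \<in> F" "x \<in> C" using UF by blast
    then show "x \<in> N" using chamber_or_negligible[of C] \<open>x \<in> - M\<close> by (auto simp: M_def N_def)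
  qed
  moreover have "negligible N" unfolding N_def using finite_F by (intro negligible_Union) auto
  moreover have "open (- M)"
    unfolding M_def by (intro open_Compl closed_Union) (auto simp: closed_gen_cone)
  ultimately have "- M = {}" using open_not_negligible negligible_subset by blast
  then show ?thesis by (auto simp: M_def)
qed

lemma generator_in_chamber_cone:
  assumes J: "chamber J" and vi: "v i \<in> gen_cone J"
  shows "i \<in> J"
proof -
  have face: "(gen_cone J \<inter> ray i) face_of gen_cone J"
    using Int_face_of_F[OF _ ray_in_F] J by (simp add: chamber_def)
  have lam: "0 \<le> chamber_dual J j \<bullet> v i" if "j \<in> J" for j
    using vi that gen_cone_chamber[OF J] by auto
  have "\<exists>k\<in>J. 0 < chamber_dual J k \<bullet> v i"
  proof (rule ccontr)
    assume "\<not> ?thesis"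
    then have "\<forall>j\<in>J. chamber_dual J j \<bullet> v i = 0" using lam by force
    then have "v i = 0" using chamber_expansion[OF J, of "v i"] by simp
    then show False using generator_nonzero by simp
  qed
  then obtain k where k: "k \<in> J" "0 < chamber_dual J k \<bullet> v i" by blast
  define l where "l = chamber_dual J k \<bullet> v i"
  \<comment> \<open>\<open>v i\<close> is the midpoint of \<open>a = 2 l v\<^sub>k\<close> and \<open>b = 2 v\<^sub>i - a\<close>, both in the chamber\<close>
  define a where "a = (2 * l) *\<^sub>R v k"
  define b where "b = 2 *\<^sub>R v i - a"
  have lp: "l > 0" using k(2) by (simp add: l_def)
  have aC: "a \<in> gen_cone J"
    unfolding a_def gen_cone_def using k lp by (simp add: convex_cone_hull_mul hull_inc)
  have "0 \<le> chamber_dual J j \<bullet> b" if "j \<in> J" for j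
    using lam[OF that] inner_chamber_dual[OF J that k(1)]
    by (auto simp: b_def a_def l_def inner_diff_right)
  then have bC: "b \<in> gen_cone J" using gen_cone_chamber[OF J] by auto
  have "midpoint a b = v i" by (simp add: midpoint_def b_def scaleR_diff_right)
  then have "a \<in> ray i"
    using face_of_midpoint[OF face aC bC] vi by (simp add: ray_def hull_inc)
  then obtain s where s: "a = s *\<^sub>R v i" "0 \<le> s" by (auto simp: ray_eq)
  moreover have "a \<noteq> 0" using lp generator_nonzero[of k] by (simp add: a_def)
  ultimately have "0 < s / (2 * l)" using lp by auto
  moreover have "v k = (s / (2 * l)) *\<^sub>R v i"
  proof -
    have "v k = (1 / (2 * l)) *\<^sub>R a" using lp by (simp add: a_def)
    then show ?thesis using s(1) by simp
  qed
  ultimately have "k = i" by (rule generator_parallel_eq)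
  then show ?thesis using k by simp
qed

lemma generator_in_some_chamber: "\<exists>J. chamber J \<and> i \<in> J"
  using chambers_cover[of "v i"] generator_in_chamber_cone by blast

end

section \<open>The deformation cone in support-vector coordinates\<close>

context simplicial_polytopal_fan
begin

lemma chamber_generator_sum_in_interior:
  assumes J: "chamber J"
  shows "(\<Sum>j\<in>J. v j) \<in> rel_interior (gen_cone J)"
proof -
  let ?O = "\<Inter>j\<in>J. {u. 0 < chamber_dual J j \<bullet> u}"
  have "chamber_dual J k \<bullet> (\<Sum>j\<in>J. v j) = 1" if "k \<in> J" for k
  proof -
    have "chamber_dual J k \<bullet> (\<Sum>j\<in>J. v j) = (\<Sum>j\<in>J. if j = k then 1 else 0)"
      unfolding inner_sum_right by (rule sum.cong) (auto simp: inner_chamber_dual[OF J that])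
    then show ?thesis using that by simp
  qed
  then have "(\<Sum>j\<in>J. v j) \<in> ?O" by auto
  moreover have "open ?O" by (intro open_INT finite ballI open_halfspace_gt)
  moreover have "?O \<subseteq> gen_cone J" using gen_cone_chamber[OF J] by (auto intro: less_imp_le)
  ultimately show ?thesis
    using interior_maximal interior_subset_rel_interior by blast
qed

lemma chamber_common_maximizer:
  assumes P: "P \<in> deformation_polytopes F" and J: "chamber J"
  obtains x where "x \<in> P" "\<And>w. w \<in> gen_cone J \<Longrightarrow> x \<bullet> w = support_fun P w"
proof -
  define u0 where "u0 = (\<Sum>j\<in>J. v j)"
  define G where "G = P \<inter> {x. u0 \<bullet> x = support_fun P u0}"
  have Ppoly: "is_polytope P" using P by (simp add: deformation_polytopes_def)
  note G = maximal_face_normal_cone[OF Ppoly, of u0, folded G_def]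
  then have "normal_cone P G \<in> normal_fan P" by (auto simp: normal_fan_def)
  then obtain S where S: "S \<subseteq> F" "normal_cone P G = \<Union>S"
    using P by (auto simp: deformation_polytopes_def coarsens_def)
  then obtain C where C: "C \<in> S" "u0 \<in> C" using G(3) by auto
  \<comment> \<open>a cone of the fan meeting the relative interior of a chamber contains the chamber\<close>
  have "u0 \<in> rel_interior (gen_cone J)"
    unfolding u0_def by (rule chamber_generator_sum_in_interior[OF J])
  moreover have "(gen_cone J \<inter> C) face_of gen_cone J"
    using Int_face_of_F J C S by (auto simp: chamber_def)
  then have "gen_cone J \<subseteq> gen_cone J \<inter> C"
    by (rule subset_of_face_of) (use C rel_interior_subset calculation in blast)+
  then have "gen_cone J \<subseteq> normal_cone P G" using S C by auto
  moreover obtain x where "x \<in> G" using G(2) by blast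
  ultimately show ?thesis using that[of x] by (auto simp: G_def normal_cone_def)
qed

lemma support_fun_chamber:
  assumes P: "P \<in> deformation_polytopes F" and J: "chamber J" and u: "u \<in> gen_cone J"
  shows "support_fun P u = (\<Sum>j\<in>J. (chamber_dual J j \<bullet> u) * support_fun P (v j))"
proof -
  obtain x where x: "x \<in> P" "\<And>w. w \<in> gen_cone J \<Longrightarrow> x \<bullet> w = support_fun P w"
    using chamber_common_maximizer[OF P J] by blast
  have "support_fun P u = x \<bullet> u" using x u by simp
  also have "\<dots> = (\<Sum>j\<in>J. (chamber_dual J j \<bullet> u) * (x \<bullet> v j))" by (rule inner_chamber_expansion[OF J])
  also have "\<dots> = (\<Sum>j\<in>J. (chamber_dual J j \<bullet> u) * support_fun P (v j))"
    using x generator_in_gen_cone by (intro sum.cong) auto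
  finally show ?thesis .
qed

definition support_vec :: "'a set \<Rightarrow> real^'n" where
  "support_vec P = (\<chi> i. support_fun P (v i))"

definition polytope_of :: "real^'n \<Rightarrow> 'a set" where
  "polytope_of h = {x. \<forall>i. x \<bullet> v i \<le> h $ i}"

text \<open>The vertex of \<^term>\<open>polytope_of h\<close> whose normal cone is the chamber \<open>J\<close>.\<close>

definition chamber_vertex :: "'n set \<Rightarrow> real^'n \<Rightarrow> 'a" where
  "chamber_vertex J h = (\<Sum>j\<in>J. (h $ j) *\<^sub>R chamber_dual J j)"

definition deformation_cone :: "(real^'n) set" where
  "deformation_cone = {h. \<forall>J. chamber J \<longrightarrow> chamber_vertex J h \<in> polytope_of h}"

lemma linear_chamber_vertex: "linear (chamber_vertex J)"
  by (rule linearI) (simp_all add: chamber_vertex_def scaleR_add_left sum.distrib scaleR_sum_right)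

lemma inner_chamber_vertex_generator:
  assumes J: "chamber J" and k: "k \<in> J"
  shows "chamber_vertex J h \<bullet> v k = h $ k"
proof -
  have "chamber_vertex J h \<bullet> v k = (\<Sum>j\<in>J. if j = k then h $ k else 0)"
    unfolding chamber_vertex_def inner_sum_left
    by (rule sum.cong) (auto simp: inner_chamber_dual[OF J _ k])
  then show ?thesis using k by simp
qed

lemma inner_chamber_vertex: "chamber_vertex J h \<bullet> u = (\<Sum>j\<in>J. (chamber_dual J j \<bullet> u) * h $ j)"
  unfolding chamber_vertex_def inner_sum_left by (simp add: mult.commute)

lemma support_vec_in_deformation_cone:
  assumes P: "P \<in> deformation_polytopes F"
  shows "support_vec P \<in> deformation_cone"
proof -
  have compact: "compact P"
    using P by (simp add: deformation_polytopes_def is_polytope_def polytope_imp_compact)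
  have "chamber_vertex J (support_vec P) \<in> polytope_of (support_vec P)" if J: "chamber J" for J
  proof -
    obtain x where x: "x \<in> P" "\<And>w. w \<in> gen_cone J \<Longrightarrow> x \<bullet> w = support_fun P w"
      using chamber_common_maximizer[OF P J] by blast
    have "x = (\<Sum>j\<in>J. (x \<bullet> v j) *\<^sub>R chamber_dual J j)" by (rule chamber_dual_expansion[OF J])
    also have "\<dots> = chamber_vertex J (support_vec P)"
      unfolding chamber_vertex_def support_vec_def
      using x generator_in_gen_cone by (intro sum.cong) auto
    finally show ?thesis
      using support_fun_ge[OF compact x(1)] by (auto simp: polytope_of_def support_vec_def)
  qed
  then show ?thesis by (simp add: deformation_cone_def)
qed

lemma inner_le_chamber_vertex:
  assumes J: "chamber J" and u: "u \<in> gen_cone J" and x: "x \<in> polytope_of h"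
  shows "x \<bullet> u \<le> chamber_vertex J h \<bullet> u"
proof -
  have "x \<bullet> u = (\<Sum>j\<in>J. (chamber_dual J j \<bullet> u) * (x \<bullet> v j))" by (rule inner_chamber_expansion[OF J])
  also have "\<dots> \<le> (\<Sum>j\<in>J. (chamber_dual J j \<bullet> u) * h $ j)"
    using u x gen_cone_chamber[OF J] by (intro sum_mono mult_left_mono) (auto simp: polytope_of_def)
  also have "\<dots> = chamber_vertex J h \<bullet> u" by (simp add: inner_chamber_vertex)
  finally show ?thesis .
qed

lemma support_fun_polytope_of:
  assumes h: "h \<in> deformation_cone" and J: "chamber J" and u: "u \<in> gen_cone J"
  shows "support_fun (polytope_of h) u = chamber_vertex J h \<bullet> u"
  using h J inner_le_chamber_vertex[OF J u]
  by (intro support_fun_eqI) (auto simp: deformation_cone_def)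

lemma support_vec_polytope_of:
  assumes h: "h \<in> deformation_cone"
  shows "support_vec (polytope_of h) = h"
proof -
  have "support_fun (polytope_of h) (v i) = h $ i" for i
  proof -
    obtain J where J: "chamber J" "i \<in> J" using generator_in_some_chamber by blast
    then show ?thesis
      using support_fun_polytope_of[OF h J(1) generator_in_gen_cone[OF J(2)]]
      by (simp add: inner_chamber_vertex_generator)
  qed
  then show ?thesis by (simp add: support_vec_def vec_eq_iff)
qed

lemma is_polytope_polytope_of:
  assumes h: "h \<in> deformation_cone"
  shows "is_polytope (polytope_of h)"
proof -
  define R where "R = (\<Sum>J\<in>{J. chamber J}. norm (chamber_vertex J h))"
  have "norm x \<le> R" if x: "x \<in> polytope_of h" for x
  proof -
    obtain J where J: "chamber J" "x \<in> gen_cone J" using chambers_cover by blast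
    have "x \<bullet> x \<le> chamber_vertex J h \<bullet> x" by (rule inner_le_chamber_vertex[OF J x])
    also have "\<dots> \<le> norm (chamber_vertex J h) * norm x" by (rule order_trans[OF _ norm_cauchy_schwarz]) simp
    also have "\<dots> \<le> R * norm x"
      unfolding R_def using J(1) by (intro mult_right_mono member_le_sum) auto
    finally have "norm x * norm x \<le> R * norm x" by (simp add: power2_norm_eq_inner[symmetric] power2_eq_square)
    then show ?thesis by (cases "norm x = 0") (auto simp: R_def intro: sum_nonneg)
  qed
  then have "bounded (polytope_of h)" by (auto simp: bounded_iff)
  moreover have "polytope_of h = (\<Inter>i. {x. v i \<bullet> x \<le> h $ i})"
    by (auto simp: polytope_of_def inner_commute)
  then have "polyhedron (polytope_of h)"
    by (auto intro!: polyhedron_Inter polyhedron_halfspace_le)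
  moreover have "polytope_of h \<noteq> {}"
    using h chambers_cover by (auto simp: deformation_cone_def)
  ultimately show ?thesis by (simp add: is_polytope_def polytope_eq_bounded_polyhedron)
qed

lemma chamber_face_in_F:
  assumes J: "chamber J" and u: "u \<in> gen_cone J"
  defines "C \<equiv> {w \<in> gen_cone J. \<forall>j\<in>J. chamber_dual J j \<bullet> u = 0 \<longrightarrow> chamber_dual J j \<bullet> w = 0}"
  shows "C \<in> F" and "u \<in> C"
proof -
  define Z where "Z = {j\<in>J. chamber_dual J j \<bullet> u = 0}"
  define \<zeta> where "\<zeta> = (\<Sum>j\<in>Z. chamber_dual J j)"
  have nonneg: "0 \<le> chamber_dual J j \<bullet> w" if "w \<in> gen_cone J" "j \<in> J" for w j
    using that gen_cone_chamber[OF J] by auto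
  have "(\<Sum>j\<in>Z. chamber_dual J j \<bullet> w) = 0 \<longleftrightarrow> (\<forall>j\<in>Z. chamber_dual J j \<bullet> w = 0)"
    if "w \<in> gen_cone J" for w
    using nonneg[OF that] by (intro sum_nonneg_eq_0_iff) (auto simp: Z_def)
  then have "C = gen_cone J \<inter> {w. (- \<zeta>) \<bullet> w = 0}"
    unfolding C_def \<zeta>_def inner_minus_left inner_sum_left neg_equal_0_iff_equal
    by (auto simp: Z_def)
  also have "\<dots> face_of gen_cone J"
    using nonneg by (intro face_of_Int_supporting_hyperplane_le convex_gen_cone)
      (auto simp: \<zeta>_def Z_def inner_sum_left intro!: sum_nonneg)
  finally have "C face_of gen_cone J" .
  moreover have "0 \<in> C" by (simp add: C_def gen_cone_def convex_cone_hull_contains_0)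
  ultimately show "C \<in> F" using face_in_F J by (auto simp: chamber_def)
  show "u \<in> C" using u by (simp add: C_def)
qed

text \<open>Complementary slackness: a maximizer of \<open>u\<close> over \<^term>\<open>polytope_of h\<close> is tight on all
  facets whose chamber coefficient in \<open>u\<close> is positive, hence maximizes every \<open>w\<close> of the face above.\<close>

lemma polytope_of_maximizer_extends:
  assumes h: "h \<in> deformation_cone" and J: "chamber J" and u: "u \<in> gen_cone J"
    and x: "x \<in> polytope_of h" "x \<bullet> u = support_fun (polytope_of h) u"
    and w: "w \<in> gen_cone J" "\<And>j. j \<in> J \<Longrightarrow> chamber_dual J j \<bullet> u = 0 \<Longrightarrow> chamber_dual J j \<bullet> w = 0"
  shows "x \<bullet> w = support_fun (polytope_of h) w"
proof -
  have slack: "(\<Sum>j\<in>J. (chamber_dual J j \<bullet> z) * (h $ j - x \<bullet> v j)) = chamber_vertex J h \<bullet> z - x \<bullet> z" for z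
    by (simp add: inner_chamber_vertex inner_chamber_expansion[OF J, of x z] right_diff_distrib sum_subtractf)
  have nn: "0 \<le> (chamber_dual J j \<bullet> u) * (h $ j - x \<bullet> v j)" if "j \<in> J" for j
    using u that x(1) gen_cone_chamber[OF J] by (auto simp: polytope_of_def)
  have "(\<Sum>j\<in>J. (chamber_dual J j \<bullet> u) * (h $ j - x \<bullet> v j)) = 0"
    using slack[of u] x(2) support_fun_polytope_of[OF h J u] by simp
  then have tight: "(chamber_dual J j \<bullet> u) * (h $ j - x \<bullet> v j) = 0" if "j \<in> J" for j
    using nn that by (simp add: sum_nonneg_eq_0_iff)
  have "(\<Sum>j\<in>J. (chamber_dual J j \<bullet> w) * (h $ j - x \<bullet> v j)) = 0"
    using tight w(2) by (intro sum.neutral) (metis mult_eq_0_iff)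
  then show ?thesis using slack[of w] support_fun_polytope_of[OF h J w(1)] by simp
qed

lemma coarsens_normal_fan_polytope_of:
  assumes h: "h \<in> deformation_cone"
  shows "coarsens (normal_fan (polytope_of h)) F"
  unfolding coarsens_def
proof
  fix N assume "N \<in> normal_fan (polytope_of h)"
  then obtain G where G: "G face_of polytope_of h" "N = normal_cone (polytope_of h) G"
    by (auto simp: normal_fan_def)
  have "N \<subseteq> \<Union>{C\<in>F. C \<subseteq> N}"
  proof
    fix u assume uN: "u \<in> N"
    obtain J where J: "chamber J" "u \<in> gen_cone J" using chambers_cover by blast
    define C where "C = {w \<in> gen_cone J. \<forall>j\<in>J. chamber_dual J j \<bullet> u = 0 \<longrightarrow> chamber_dual J j \<bullet> w = 0}"
    have "C \<subseteq> N"
    proof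
      fix w assume "w \<in> C"
      have "x \<bullet> w = support_fun (polytope_of h) w" if "x \<in> G" for x
        using polytope_of_maximizer_extends[OF h J, of x w] face_of_imp_subset[OF G(1)] that uN \<open>w \<in> C\<close>
        by (auto simp: C_def G(2) normal_cone_def)
      then show "w \<in> N" by (simp add: G(2) normal_cone_def)
    qed
    then show "u \<in> \<Union>{C\<in>F. C \<subseteq> N}"
      using chamber_face_in_F[OF J] by (auto simp: C_def)
  qed
  then show "\<exists>S\<subseteq>F. N = \<Union>S" by (intro exI[of _ "{C\<in>F. C \<subseteq> N}"]) auto
qed

lemma polytope_of_in_deformation_polytopes:
  "h \<in> deformation_cone \<Longrightarrow> polytope_of h \<in> deformation_polytopes F"
  by (simp add: deformation_polytopes_def is_polytope_polytope_of coarsens_normal_fan_polytope_of)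

lemma deformation_cone_eq: "deformation_cone = support_vec ` deformation_polytopes F"
  using support_vec_in_deformation_cone polytope_of_in_deformation_polytopes support_vec_polytope_of
  by (metis (no_types, lifting) image_iff subsetI subset_antisym image_subsetI)

lemma convex_cone_deformation_cone: "convex_cone deformation_cone"
  unfolding convex_cone_iff deformation_cone_def polytope_of_def
  by (auto simp: linear_0[OF linear_chamber_vertex] linear_add[OF linear_chamber_vertex]
      linear_scale[OF linear_chamber_vertex] inner_add_left intro: add_mono mult_left_mono)

lemma closed_deformation_cone: "closed deformation_cone"
proof -
  have "continuous_on UNIV (\<lambda>h. chamber_vertex J h \<bullet> v i)" for J i
    using linear_chamber_vertex[of J]
    by (intro continuous_intros linear_continuous_on) (simp add: linear_conv_bounded_linear)
  moreover have "continuous_on UNIV (\<lambda>h::real^'n. h $ i)" for i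
    by (rule linear_continuous_on) (rule bounded_linear_vec_nth)
  ultimately have "closed {h. chamber J \<longrightarrow> (\<forall>i. chamber_vertex J h \<bullet> v i \<le> h $ i)}" for J
    by (cases "chamber J") (simp_all add: closed_Collect_all closed_Collect_le)
  then show ?thesis
    unfolding deformation_cone_def polytope_of_def mem_Collect_eq by (intro closed_Collect_all)
qed

end

section \<open>Uniqueness of the least squares estimator\<close>

context simplicial_polytopal_fan
begin

definition chamber_of :: "'a \<Rightarrow> 'n set" where
  "chamber_of u = (SOME J. chamber J \<and> u \<in> gen_cone J)"

lemma chamber_of: "chamber (chamber_of u)" "u \<in> gen_cone (chamber_of u)"
  using someI_ex[OF chambers_cover[of u]] by (simp_all add: chamber_of_def)

text \<open>On the deformation cone, \<open>h\<^sub>P(u)\<close> is a linear function of the support vector of \<open>P\<close>.\<close>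

definition support_lin :: "'a \<Rightarrow> real^'n \<Rightarrow> real" where
  "support_lin u h = (\<Sum>j\<in>chamber_of u. (chamber_dual (chamber_of u) j \<bullet> u) * h $ j)"

lemma support_fun_eq_support_lin:
  assumes "P \<in> deformation_polytopes F"
  shows "support_fun P u = support_lin u (support_vec P)"
proof -
  have "support_fun P u = (\<Sum>j\<in>chamber_of u. (chamber_dual (chamber_of u) j \<bullet> u) * support_fun P (v j))"
    by (rule support_fun_chamber[OF assms chamber_of])
  then show ?thesis by (simp only: support_lin_def support_vec_def vec_lambda_beta)
qed

lemma linear_support_lin: "linear (support_lin u)"
  by (rule linearI)
    (simp_all add: support_lin_def sum.distrib distrib_left sum_distrib_left mult.left_commute)

definition injective_sampling :: "(nat \<Rightarrow> 'a) \<Rightarrow> nat \<Rightarrow> bool" where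
  "injective_sampling U m \<longleftrightarrow> (\<forall>P\<in>deformation_polytopes F. \<forall>Q\<in>deformation_polytopes F.
     (\<forall>k<m. support_fun P (U k) = support_fun Q (U k)) \<longrightarrow> support_vector v P = support_vector v Q)"

lemma support_vector_eq_iff:
  "support_vector v P = support_vector v Q \<longleftrightarrow> support_vec P = support_vec Q"
  by (simp add: support_vector_def support_vec_def vec_eq_iff fun_eq_iff)

lemma injective_sampling_iff:
  "injective_sampling U m \<longleftrightarrow> (\<forall>h\<in>deformation_cone. \<forall>h'\<in>deformation_cone.
     (\<forall>k<m. support_lin (U k) h = support_lin (U k) h') \<longrightarrow> h = h')"
proof
  assume inj: "injective_sampling U m"
  show "\<forall>h\<in>deformation_cone. \<forall>h'\<in>deformation_cone.
     (\<forall>k<m. support_lin (U k) h = support_lin (U k) h') \<longrightarrow> h = h'"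
  proof (intro ballI impI)
    fix h h' assume h: "h \<in> deformation_cone" "h' \<in> deformation_cone"
      and eq: "\<forall>k<m. support_lin (U k) h = support_lin (U k) h'"
    note D = polytope_of_in_deformation_polytopes[OF h(1)] polytope_of_in_deformation_polytopes[OF h(2)]
    have "\<forall>k<m. support_fun (polytope_of h) (U k) = support_fun (polytope_of h') (U k)"
      using eq support_fun_eq_support_lin[OF D(1)] support_fun_eq_support_lin[OF D(2)]
      by (simp add: support_vec_polytope_of h)
    then have "support_vec (polytope_of h) = support_vec (polytope_of h')"
      using inj D unfolding injective_sampling_def support_vector_eq_iff by blast
    then show "h = h'" by (simp add: support_vec_polytope_of h)
  qed
next
  assume inj: "\<forall>h\<in>deformation_cone. \<forall>h'\<in>deformation_cone.
     (\<forall>k<m. support_lin (U k) h = support_lin (U k) h') \<longrightarrow> h = h'"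
  show "injective_sampling U m"
    unfolding injective_sampling_def support_vector_eq_iff
  proof (intro ballI impI)
    fix P Q assume PQ: "P \<in> deformation_polytopes F" "Q \<in> deformation_polytopes F"
      and eq: "\<forall>k<m. support_fun P (U k) = support_fun Q (U k)"
    have "support_lin (U k) (support_vec P) = support_lin (U k) (support_vec Q)" if "k < m" for k
      using eq that by (simp add: support_fun_eq_support_lin[OF PQ(1), symmetric]
          support_fun_eq_support_lin[OF PQ(2), symmetric])
    then show "support_vec P = support_vec Q"
      using inj support_vec_in_deformation_cone[OF PQ(1)] support_vec_in_deformation_cone[OF PQ(2)]
      by blast
  qed
qed

lemma ls_loss_minimal_iff:
  assumes m: "0 < m" and P: "P \<in> deformation_polytopes F"
  shows "(\<forall>R\<in>deformation_polytopes F. ls_loss U m y P \<le> ls_loss U m y R) \<longleftrightarrow>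
    (\<forall>h\<in>deformation_cone.
       (\<Sum>k<m. (support_lin (U k) (support_vec P) - y k)\<^sup>2) \<le> (\<Sum>k<m. (support_lin (U k) h - y k)\<^sup>2))"
proof -
  define Q where "Q h = (\<Sum>k<m. (support_lin (U k) h - y k)\<^sup>2)" for h
  have loss: "ls_loss U m y R = Q (support_vec R) / real m" if "R \<in> deformation_polytopes F" for R
    using that by (simp add: ls_loss_def Q_def support_fun_eq_support_lin)
  have "ls_loss U m y P \<le> ls_loss U m y R \<longleftrightarrow> Q (support_vec P) \<le> Q (support_vec R)"
    if "R \<in> deformation_polytopes F" for R
    using loss[OF P] loss[OF that] m by (simp add: divide_le_cancel)
  then show ?thesis unfolding deformation_cone_eq Q_def by blast
qed

lemma card_lse_eq_1:
  assumes m: "0 < m" and inj: "injective_sampling U m"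
  shows "card (lse F v U m y) = 1"
proof -
  define Q where "Q h = (\<Sum>k<m. (support_lin (U k) h - y k)\<^sup>2)" for h
  have injK: "\<And>h h'. h \<in> deformation_cone \<Longrightarrow> h' \<in> deformation_cone \<Longrightarrow>
      \<forall>k<m. support_lin (U k) h = support_lin (U k) h' \<Longrightarrow> h = h'"
    using inj injective_sampling_iff by blast
  have convex_deformation_cone: "convex deformation_cone"
    using convex_cone_deformation_cone by (simp add: convex_cone_def)
  obtain hs where hs: "hs \<in> deformation_cone" "\<forall>h\<in>deformation_cone. Q hs \<le> Q h"
    using least_squares_exists[OF convex_cone_deformation_cone closed_deformation_cone
        linear_support_lin injK] unfolding Q_def by blast
  note minimizer_iff = ls_loss_minimal_iff[OF m, of _ U y, folded Q_def]
  have "lse F v U m y = {support_vector v (polytope_of hs)}"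
  proof safe
    fix f assume "f \<in> lse F v U m y"
    then obtain P where P: "f = support_vector v P" "P \<in> deformation_polytopes F"
      "\<forall>R\<in>deformation_polytopes F. ls_loss U m y P \<le> ls_loss U m y R"
      by (auto simp: lse_def)
    have "\<forall>h\<in>deformation_cone. Q (support_vec P) \<le> Q h"
      using minimizer_iff[OF P(2)] P(3) by blast
    then have "support_vec P = hs"
      using least_squares_minimizer_unique[where a="\<lambda>k. support_lin (U k)",
          OF convex_deformation_cone linear_support_lin injK support_vec_in_deformation_cone[OF P(2)]
          _ hs(1)] hs(2)
      unfolding Q_def by blast
    then show "f = support_vector v (polytope_of hs)"
      using P(1) support_vec_polytope_of[OF hs(1)] by (simp add: support_vector_eq_iff)
  next
    have PD: "polytope_of hs \<in> deformation_polytopes F"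
      by (rule polytope_of_in_deformation_polytopes[OF hs(1)])
    then have "\<forall>R\<in>deformation_polytopes F. ls_loss U m y (polytope_of hs) \<le> ls_loss U m y R"
      using minimizer_iff[OF PD] support_vec_polytope_of[OF hs(1)] hs(2) by simp
    then show "support_vector v (polytope_of hs) \<in> lse F v U m y"
      using PD unfolding lse_def by blast
  qed
  then show ?thesis by simp
qed

lemma card_lse_not_1:
  assumes "\<not> injective_sampling U m"
  shows "\<exists>y. card (lse F v U m y) \<noteq> 1"
proof -
  obtain P Q where PQ: "P \<in> deformation_polytopes F" "Q \<in> deformation_polytopes F"
    "\<forall>k<m. support_fun P (U k) = support_fun Q (U k)" "support_vector v P \<noteq> support_vector v Q"
    using assms by (auto simp: injective_sampling_def)
  \<comment> \<open>fitting the exact values of \<open>h\<^sub>P\<close> gives loss zero to both \<open>P\<close> and \<open>Q\<close>\<close>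
  define y where "y k = support_fun P (U k)" for k
  have "ls_loss U m y P = 0" "ls_loss U m y Q = 0"
    using PQ(3) by (simp_all add: ls_loss_def y_def)
  moreover have "0 \<le> ls_loss U m y R" for R by (simp add: ls_loss_def sum_nonneg)
  ultimately have "support_vector v P \<in> lse F v U m y" "support_vector v Q \<in> lse F v U m y"
    unfolding lse_def using PQ(1,2) by auto
  then have "card (lse F v U m y) \<noteq> 1" using PQ(4) by (auto simp: card_Suc_eq)
  then show ?thesis by blast
qed

lemma card_lse_eq_1_iff:
  "0 < m \<Longrightarrow> (\<forall>y. card (lse F v U m y) = 1) \<longleftrightarrow> injective_sampling U m"
  using card_lse_eq_1 card_lse_not_1 by blast

end

section \<open>Measurability of the injectivity event\<close>

lemma closed_relation_closure:
  assumes "closed {p. R (fst p) (snd p)}" "\<And>x y. x \<in> W \<Longrightarrow> y \<in> W \<Longrightarrow> R x y"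
    and "x \<in> closure W" "y \<in> closure W"
  shows "R x y"
proof -
  have "closure (W \<times> W) \<subseteq> {p. R (fst p) (snd p)}"
    using assms(1,2) by (intro closure_minimal) auto
  then show ?thesis using assms(3,4) by (auto simp: closure_Times)
qed

context simplicial_polytopal_fan
begin

lemma injective_sampling_iff_coercive:
  "injective_sampling U m \<longleftrightarrow> (\<exists>N::nat. \<forall>h\<in>deformation_cone. \<forall>h'\<in>deformation_cone.
     (norm (h - h'))\<^sup>2 / Suc N \<le> (\<Sum>k<m. (support_lin (U k) h - support_lin (U k) h')\<^sup>2))"
proof
  assume "injective_sampling U m"
  then have "\<And>h h'. h \<in> deformation_cone \<Longrightarrow> h' \<in> deformation_cone \<Longrightarrow>
      \<forall>k<m. support_lin (U k) h = support_lin (U k) h' \<Longrightarrow> h = h'"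
    using injective_sampling_iff by blast
  then obtain c where c: "c > 0" "\<forall>h\<in>deformation_cone. \<forall>h'\<in>deformation_cone.
      c * (norm (h - h'))\<^sup>2 \<le> (\<Sum>k<m. (support_lin (U k) h - support_lin (U k) h')\<^sup>2)"
    using injective_on_cone_imp_coercive[where a="\<lambda>k. support_lin (U k)",
        OF convex_cone_deformation_cone linear_support_lin] by blast
  obtain N where N: "1 / real (Suc N) < c" using reals_Archimedean[OF c(1)] by (auto simp: inverse_eq_divide)
  have le_c: "(norm (h - h'))\<^sup>2 / Suc N \<le> c * (norm (h - h'))\<^sup>2" for h h'
    using mult_right_mono[OF less_imp_le[OF N] zero_le_power2[of "norm (h - h')"]] by simp
  have "(norm (h - h'))\<^sup>2 / Suc N \<le> (\<Sum>k<m. (support_lin (U k) h - support_lin (U k) h')\<^sup>2)"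
    if "h \<in> deformation_cone" "h' \<in> deformation_cone" for h h'
    using order_trans[OF le_c c(2)[rule_format, OF that]] .
  then show "\<exists>N::nat. \<forall>h\<in>deformation_cone. \<forall>h'\<in>deformation_cone.
      (norm (h - h'))\<^sup>2 / Suc N \<le> (\<Sum>k<m. (support_lin (U k) h - support_lin (U k) h')\<^sup>2)"
    by blast
next
  assume "\<exists>N::nat. \<forall>h\<in>deformation_cone. \<forall>h'\<in>deformation_cone.
      (norm (h - h'))\<^sup>2 / Suc N \<le> (\<Sum>k<m. (support_lin (U k) h - support_lin (U k) h')\<^sup>2)"
  then obtain N :: nat where N: "\<forall>h\<in>deformation_cone. \<forall>h'\<in>deformation_cone.
      (norm (h - h'))\<^sup>2 / Suc N \<le> (\<Sum>k<m. (support_lin (U k) h - support_lin (U k) h')\<^sup>2)"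
    by blast
  show "injective_sampling U m"
    unfolding injective_sampling_iff
  proof (intro ballI impI)
    fix h h' assume h: "h \<in> deformation_cone" "h' \<in> deformation_cone"
      and eq: "\<forall>k<m. support_lin (U k) h = support_lin (U k) h'"
    have "(norm (h - h'))\<^sup>2 / Suc N \<le> (\<Sum>k<m. (support_lin (U k) h - support_lin (U k) h')\<^sup>2)"
      using N h by blast
    also have "\<dots> = 0" using eq by simp
    finally show "h = h'" by (simp add: divide_le_0_iff)
  qed
qed

lemma borel_measurable_support_lin_sample:
  assumes h: "h \<in> deformation_cone" and k: "k \<in> I"
  shows "(\<lambda>U. support_lin (U k) h) \<in> borel_measurable (PiM I (\<lambda>_. uniform_sphere))"
proof -
  have "support_lin u h = support_fun (polytope_of h) u" for u
    using support_fun_eq_support_lin[OF polytope_of_in_deformation_polytopes[OF h]]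
    by (simp add: support_vec_polytope_of[OF h])
  moreover have "compact (polytope_of h)" "polytope_of h \<noteq> {}"
    using is_polytope_polytope_of[OF h] by (auto simp: is_polytope_def polytope_imp_compact)
  then have "(\<lambda>U. support_fun (polytope_of h) (U k)) \<in> borel_measurable (PiM I (\<lambda>_. uniform_sphere))"
    by (intro measurable_compose[OF measurable_sample[OF k] borel_measurable_continuous_onI]
        continuous_on_support_fun)
  ultimately show ?thesis by simp
qed

lemma sets_injective_sampling:
  "{U \<in> space (PiM {..<m} (\<lambda>_. uniform_sphere)). injective_sampling U m}
     \<in> sets (PiM {..<m} (\<lambda>_. uniform_sphere))"
proof -
  let ?M = "PiM {..<m} (\<lambda>_. uniform_sphere :: 'a measure)"
  define good where "good U N h h' \<longleftrightarrow>
      (norm (h - h'))\<^sup>2 / Suc N \<le> (\<Sum>k<m. (support_lin (U k) h - support_lin (U k) h')\<^sup>2)"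
    for U N and h h' :: "real^'n"
  obtain W where W: "countable W" "W \<subseteq> deformation_cone" "deformation_cone \<subseteq> closure W"
    using separable by blast
  \<comment> \<open>the coercivity inequality is a closed condition, so it suffices to test it on a countable dense set\<close>
  have "continuous_on UNIV (\<lambda>p::(real^'n) \<times> (real^'n). support_lin u (fst p))"
    "continuous_on UNIV (\<lambda>p::(real^'n) \<times> (real^'n). support_lin u (snd p))" for u
    by (rule linear_continuous_on_compose[OF continuous_on_fst[OF continuous_on_id] linear_support_lin]
        linear_continuous_on_compose[OF continuous_on_snd[OF continuous_on_id] linear_support_lin])+
  then have closed: "closed {p. good U N (fst p) (snd p)}" for U N
    unfolding good_def by (intro closed_Collect_le continuous_intros) auto
  have "(\<forall>h\<in>deformation_cone. \<forall>h'\<in>deformation_cone. good U N h h') \<longleftrightarrow>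
      (\<forall>h\<in>W. \<forall>h'\<in>W. good U N h h')" for U N
  proof (rule iffI; intro ballI)
    fix h h' assume "\<forall>h\<in>W. \<forall>h'\<in>W. good U N h h'" "h \<in> deformation_cone" "h' \<in> deformation_cone"
    then show "good U N h h'"
      using closed_relation_closure[of "good U N" W h h', OF closed] W(3) by blast
  qed (use W(2) in blast)
  then have "{U \<in> space ?M. injective_sampling U m} = {U \<in> space ?M. \<exists>N. \<forall>h\<in>W. \<forall>h'\<in>W. good U N h h'}"
    by (simp add: injective_sampling_iff_coercive good_def)
  also have "\<dots> \<in> sets ?M"
    unfolding good_def using W(1,2)
    by (intro sets.sets_Collect_countable_Ex sets.sets_Collect_countable_All' borel_measurable_le
        borel_measurable_const borel_measurable_sum borel_measurable_power borel_measurable_diff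
        borel_measurable_support_lin_sample) auto
  finally show ?thesis .
qed

end

section \<open>Samples near every ray force injective sampling\<close>

context simplicial_polytopal_fan
begin

definition unit_gen :: "'n \<Rightarrow> 'a" where "unit_gen i = v i /\<^sub>R norm (v i)"

definition chamber_close :: "real \<Rightarrow> 'n \<Rightarrow> 'a \<Rightarrow> bool" where
  "chamber_close \<epsilon> i u \<longleftrightarrow> (\<exists>J. chamber J \<and> i \<in> J \<and> u \<in> gen_cone J \<and>
     (\<forall>j\<in>J. \<bar>chamber_dual J j \<bullet> u - chamber_dual J j \<bullet> unit_gen i\<bar> < \<epsilon>))"

lemma norm_unit_gen: "norm (unit_gen i) = 1"
  using generator_nonzero by (simp add: unit_gen_def)

lemma inner_chamber_dual_unit_gen:
  "chamber J \<Longrightarrow> i \<in> J \<Longrightarrow> j \<in> J \<Longrightarrow>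
    chamber_dual J j \<bullet> unit_gen i = (if i = j then 1 / norm (v i) else 0)"
  by (simp add: unit_gen_def inner_chamber_dual divide_inverse)

lemma unit_gen_in_chamber_cone:
  assumes J: "chamber J" and "unit_gen i \<in> gen_cone J"
  shows "i \<in> J"
proof -
  have "norm (v i) *\<^sub>R unit_gen i \<in> gen_cone J"
    using assms(2) by (simp add: gen_cone_def convex_cone_hull_mul)
  then show ?thesis
    using generator_in_chamber_cone[OF J] generator_nonzero by (simp add: unit_gen_def)
qed

lemma support_lin_chamber:
  assumes h: "h \<in> deformation_cone" and J: "chamber J" and u: "u \<in> gen_cone J"
  shows "support_lin u h = (\<Sum>j\<in>J. (chamber_dual J j \<bullet> u) * h $ j)"
  using support_fun_eq_support_lin[OF polytope_of_in_deformation_polytopes[OF h], of u]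
    support_fun_polytope_of[OF h J u]
  by (simp add: support_vec_polytope_of[OF h] inner_chamber_vertex)

lemma eventually_outside_other_chambers:
  "\<forall>\<^sub>F u in nhds (unit_gen i). \<forall>J\<in>{J. chamber J \<and> i \<notin> J}. u \<notin> gen_cone J"
proof (rule eventually_ball_finite)
  show "\<forall>J\<in>{J. chamber J \<and> i \<notin> J}. \<forall>\<^sub>F u in nhds (unit_gen i). u \<notin> gen_cone J"
  proof
    fix J assume "J \<in> {J. chamber J \<and> i \<notin> J}"
    then have J: "chamber J" "i \<notin> J" by auto
    have "\<forall>\<^sub>F u in nhds (unit_gen i). u \<in> - gen_cone J"
      by (rule eventually_nhds_in_open)
        (use closed_gen_cone[OF J(1)] unit_gen_in_chamber_cone[OF J(1)] J(2) in auto)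
    then show "\<forall>\<^sub>F u in nhds (unit_gen i). u \<notin> gen_cone J" by simp
  qed
qed simp

lemma eventually_chamber_coordinates_close:
  assumes "0 < \<epsilon>"
  shows "\<forall>\<^sub>F u in nhds x. \<forall>J\<in>{J. chamber J}. \<forall>j\<in>J. \<bar>chamber_dual J j \<bullet> u - chamber_dual J j \<bullet> x\<bar> < \<epsilon>"
proof (rule eventually_ball_finite)
  show "\<forall>J\<in>{J. chamber J}. \<forall>\<^sub>F u in nhds x. \<forall>j\<in>J. \<bar>chamber_dual J j \<bullet> u - chamber_dual J j \<bullet> x\<bar> < \<epsilon>"
  proof
    fix J
    show "\<forall>\<^sub>F u in nhds x. \<forall>j\<in>J. \<bar>chamber_dual J j \<bullet> u - chamber_dual J j \<bullet> x\<bar> < \<epsilon>"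
    proof (rule eventually_ball_finite)
      show "\<forall>j\<in>J. \<forall>\<^sub>F u in nhds x. \<bar>chamber_dual J j \<bullet> u - chamber_dual J j \<bullet> x\<bar> < \<epsilon>"
      proof
        fix j
        have "((\<lambda>u. chamber_dual J j \<bullet> u) \<longlongrightarrow> chamber_dual J j \<bullet> x) (nhds x)"
          by (intro tendsto_intros) (auto intro: filterlim_ident)
        from tendstoD[OF this assms]
        show "\<forall>\<^sub>F u in nhds x. \<bar>chamber_dual J j \<bullet> u - chamber_dual J j \<bullet> x\<bar> < \<epsilon>"
          by (simp add: dist_real_def)
      qed
    qed simp
  qed
qed simp

lemma chamber_close_near_unit_gen:
  assumes "0 < \<epsilon>"
  shows "\<exists>\<delta>>0. \<forall>u. dist u (unit_gen i) < \<delta> \<longrightarrow> chamber_close \<epsilon> i u"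
proof -
  have "\<forall>\<^sub>F u in nhds (unit_gen i). chamber_close \<epsilon> i u"
    using eventually_outside_other_chambers eventually_chamber_coordinates_close[OF assms]
  proof eventually_elim
    case (elim u)
    obtain J where "chamber J" "u \<in> gen_cone J" using chambers_cover by blast
    with elim show ?case unfolding chamber_close_def by blast
  qed
  then show ?thesis unfolding eventually_nhds_metric by blast
qed

lemma sum_norm_generators_pos: "0 < (\<Sum>i\<in>UNIV. norm (v i))"
  by (rule less_le_trans[OF _ member_le_sum]) (simp_all add: generator_nonzero)

text \<open>The tolerance that makes the sampling equations strictly diagonally dominant.\<close>

definition dominance_eps :: real where
  "dominance_eps = 1 / (4 * real CARD('n) * (\<Sum>i\<in>UNIV. norm (v i)))"

lemma dominance_eps_pos: "0 < dominance_eps"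
  using sum_norm_generators_pos by (simp add: dominance_eps_def)

lemma card_dominance_eps_less:
  "real CARD('n) * dominance_eps < 1 / (\<Sum>i\<in>UNIV. norm (v i)) - dominance_eps"
proof -
  define M where "M = (\<Sum>i\<in>UNIV. norm (v i))"
  have M_pos: "0 < M" unfolding M_def by (rule sum_norm_generators_pos)
  have "real CARD('n) * dominance_eps = 1 / (4 * M)"
    by (simp add: dominance_eps_def M_def)
  moreover have "dominance_eps \<le> 1 / (4 * M)"
    using M_pos by (simp add: dominance_eps_def M_def frac_le)
  ultimately show ?thesis
    using M_pos by (simp add: M_def[symmetric] field_simps)
qed

lemma eq_if_chamber_close_samples:
  assumes h: "h \<in> deformation_cone" "h' \<in> deformation_cone"
    and J: "\<And>i. chamber (J i)" "\<And>i. i \<in> J i" "\<And>i. u i \<in> gen_cone (J i)"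
    and close: "\<And>i j. j \<in> J i \<Longrightarrow> \<bar>chamber_dual (J i) j \<bullet> u i - chamber_dual (J i) j \<bullet> unit_gen i\<bar>
      < dominance_eps"
    and eq: "\<And>i. support_lin (u i) h = support_lin (u i) h'"
  shows "h = h'"
proof -
  \<comment> \<open>the sample \<open>u i\<close> gives one linear equation for \<open>h - h'\<close>, with coefficients \<open>c i\<close>\<close>
  define c where "c i j = (if j \<in> J i then chamber_dual (J i) j \<bullet> u i else 0)" for i j
  define M where "M = (\<Sum>i\<in>UNIV. norm (v i))"
  have row: "(\<Sum>j\<in>UNIV. c i j * (h - h') $ j) = 0" for i
  proof -
    have "(\<Sum>j\<in>UNIV. c i j * (h - h') $ j) = (\<Sum>j\<in>J i. (chamber_dual (J i) j \<bullet> u i) * (h - h') $ j)"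
      by (simp add: c_def if_distrib[of "\<lambda>x. x * _"] sum.If_cases)
    also have "\<dots> = support_lin (u i) h - support_lin (u i) h'"
      using support_lin_chamber[OF h(1) J(1,3)] support_lin_chamber[OF h(2) J(1,3)]
      by (simp add: right_diff_distrib sum_subtractf)
    finally show ?thesis using eq by simp
  qed
  have diag: "1 / M - dominance_eps \<le> c i i" for i
  proof -
    have "chamber_dual (J i) i \<bullet> unit_gen i = 1 / norm (v i)"
      using inner_chamber_dual_unit_gen[OF J(1) J(2) J(2)] by simp
    moreover have "1 / M \<le> 1 / norm (v i)"
      using member_le_sum[of i UNIV "\<lambda>i. norm (v i)"] generator_nonzero[of i]
      by (simp add: M_def frac_le)
    ultimately show ?thesis using close[OF J(2)[of i]] J(2)[of i] by (simp add: c_def abs_less_iff)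
  qed
  have off: "\<bar>c i j\<bar> \<le> dominance_eps" if "j \<noteq> i" for i j
  proof (cases "j \<in> J i")
    case True
    then have "chamber_dual (J i) j \<bullet> unit_gen i = 0"
      using inner_chamber_dual_unit_gen[OF J(1) J(2) True] that by simp
    then show ?thesis using close[OF True] True by (simp add: c_def)
  qed (use dominance_eps_pos in \<open>simp add: c_def\<close>)
  have "h - h' = 0"
    using strictly_diagonally_dominant_kernel[OF row diag off] card_dominance_eps_less dominance_eps_pos
    by (simp add: M_def)
  then show "h = h'" by simp
qed

definition cap :: "'n \<Rightarrow> 'a set" where
  "cap i = ball (unit_gen i)
     (SOME \<delta>. \<delta> > 0 \<and> (\<forall>u. dist u (unit_gen i) < \<delta> \<longrightarrow> chamber_close dominance_eps i u))"

lemma measure_cap_pos: "0 < measure uniform_sphere (cap i)"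
  and chamber_close_cap: "u \<in> cap i \<Longrightarrow> chamber_close dominance_eps i u"
proof -
  define \<delta> where
    "\<delta> = (SOME \<delta>. \<delta> > 0 \<and> (\<forall>u. dist u (unit_gen i) < \<delta> \<longrightarrow> chamber_close dominance_eps i u))"
  have \<delta>: "\<delta> > 0 \<and> (\<forall>u. dist u (unit_gen i) < \<delta> \<longrightarrow> chamber_close dominance_eps i u)"
    unfolding \<delta>_def by (rule someI_ex[OF chamber_close_near_unit_gen[OF dominance_eps_pos]])
  have cap: "cap i = ball (unit_gen i) \<delta>" by (simp add: cap_def \<delta>_def)
  show "0 < measure uniform_sphere (cap i)"
    unfolding cap using \<delta> by (intro measure_uniform_sphere_ball_pos norm_unit_gen) simp
  show "u \<in> cap i \<Longrightarrow> chamber_close dominance_eps i u"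
    using \<delta> by (simp add: cap dist_commute)
qed

lemma injective_sampling_if_caps_hit:
  assumes hit: "\<forall>i. \<exists>k\<in>{..<m}. U k \<in> cap i"
  shows "injective_sampling U m"
  unfolding injective_sampling_iff
proof (intro ballI impI)
  fix h h' assume h: "h \<in> deformation_cone" "h' \<in> deformation_cone"
    and eq: "\<forall>k<m. support_lin (U k) h = support_lin (U k) h'"
  have "\<exists>\<kappa>. \<forall>i. \<kappa> i < m \<and> U (\<kappa> i) \<in> cap i" using hit by (intro choice) auto
  then obtain \<kappa> where \<kappa>: "\<And>i. \<kappa> i < m" "\<And>i. U (\<kappa> i) \<in> cap i" by blast
  have "\<exists>J. \<forall>i. chamber (J i) \<and> i \<in> J i \<and> U (\<kappa> i) \<in> gen_cone (J i) \<and> (\<forall>j\<in>J i.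
      \<bar>chamber_dual (J i) j \<bullet> U (\<kappa> i) - chamber_dual (J i) j \<bullet> unit_gen i\<bar> < dominance_eps)"
    using chamber_close_cap[OF \<kappa>(2)] unfolding chamber_close_def by (intro choice) auto
  then obtain J where "\<And>i. chamber (J i)" "\<And>i. i \<in> J i" "\<And>i. U (\<kappa> i) \<in> gen_cone (J i)"
    "\<And>i j. j \<in> J i \<Longrightarrow> \<bar>chamber_dual (J i) j \<bullet> U (\<kappa> i) - chamber_dual (J i) j \<bullet> unit_gen i\<bar>
      < dominance_eps"
    by blast
  moreover have "support_lin (U (\<kappa> i)) h = support_lin (U (\<kappa> i)) h'" for i
    using eq \<kappa>(1) by blast
  ultimately show "h = h'" by (rule eq_if_chamber_close_samples[OF h])
qed

end

theorem proposition4p1: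
  fixes F :: "'a::euclidean_space set set" and v :: "'n::finite \<Rightarrow> 'a"
  assumes "simplicial_fan F" and "polytopal_fan F"
    and "bij_betw (\<lambda>i. convex_cone hull {v i}) UNIV (fan_rays F)"
  shows "(\<lambda>m. measure (PiM {..<m} (\<lambda>_. uniform_sphere))
            {U \<in> space (PiM {..<m} (\<lambda>_. uniform_sphere)).
               \<forall>y. card (lse F v U m y) = 1}) \<longlonglongrightarrow> 1"
proof -
  interpret simplicial_polytopal_fan F v by (rule simplicial_polytopal_fan.intro) fact+
  define M where "M m = PiM {..<m} (\<lambda>_. uniform_sphere :: 'a measure)" for m :: nat
  define Hit where "Hit m = {U \<in> space (M m). \<forall>i. \<exists>k\<in>{..<m}. U k \<in> cap i}" for m
  define Uniq where "Uniq m = {U \<in> space (M m). \<forall>y. card (lse F v U m y) = 1}" for m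
  have prob: "prob_space (M m)" for m
    unfolding M_def by (intro prob_space_PiM prob_space_uniform_sphere)
  have "\<forall>\<^sub>F m in sequentially. measure (M m) (Hit m) \<le> measure (M m) (Uniq m)"
  proof (rule eventually_sequentiallyI[of 1])
    fix m :: nat assume "1 \<le> m"
    then have "Uniq m = {U \<in> space (M m). injective_sampling U m}"
      unfolding Uniq_def using card_lse_eq_1_iff[of m] by simp
    then show "measure (M m) (Hit m) \<le> measure (M m) (Uniq m)"
      using injective_sampling_if_caps_hit sets_injective_sampling
      by (intro finite_measure.finite_measure_mono[OF prob_space.finite_measure[OF prob]])
        (auto simp: Hit_def M_def)
  qed
  moreover have "\<forall>\<^sub>F m in sequentially. measure (M m) (Uniq m) \<le> 1"
    using prob_space.prob_le_1[OF prob] by simp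
  moreover have "(\<lambda>m. measure (M m) (Hit m)) \<longlonglongrightarrow> 1"
    unfolding M_def Hit_def by (rule prob_all_hit_tendsto_1[OF _ measure_cap_pos]) (simp add: cap_def)
  ultimately show ?thesis
    unfolding M_def Uniq_def by (rule tendsto_sandwich[OF _ _ _ tendsto_const])
qed

end
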